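(* Let $p\in[1,\infty]$ and let $H:\ell^p(\mathbb{Z})\to\ell^p(\mathbb{Z})$ be given by $(Hx)_n=x_{n+1}+x_{n-1}+v(n)x_n$ with $v:\mathbb{Z}\to\mathbb{Z}$ $K$-periodic, $K\in\mathbb{N}$. Then the following are equivalent: (i) $H$ is invertible; (ii) $H_+$ is invertible; (iii) $H_-$ is invertible; (iv) $|\operatorname{tr}(M(0))|>2$.
   Context: Monodromy matrix $M(E)=T(K-1,E)\cdots T(0,E)$ with $T(n,E)=\begin{pmatrix}E-v(n)&-1\\1&0\end{pmatrix}$. With $H=(a_{ij})$ its matrix, $H_+=(a_{ij})_{i,j=0}^\infty$ on $\ell^p(\mathbb{Z}_+)$ and $H_-=(a_{ij})_{i,j=-\infty}^0$ on $\ell^p(\mathbb{Z}_-)$, where $\mathbb{Z}_+=\{0,1,\dots\}$, $\mathbb{Z}_-=\{0,-1,\dots\}$. *)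

theory Defs
  imports "HOL-Analysis.Analysis"
begin

definition transfer :: "(int \<Rightarrow> int) \<Rightarrow> int \<Rightarrow> real \<Rightarrow> real^2^2" where
  "transfer v n E = vector [vector [E - real_of_int (v n), -1], vector [1, 0]]"

fun monodromy_aux :: "(int \<Rightarrow> int) \<Rightarrow> nat \<Rightarrow> real \<Rightarrow> real^2^2" where
  "monodromy_aux v 0 E = mat 1"
| "monodromy_aux v (Suc k) E = transfer v (int k) E ** monodromy_aux v k E"

definition monodromy :: "(int \<Rightarrow> int) \<Rightarrow> nat \<Rightarrow> real \<Rightarrow> real^2^2" where
  "monodromy v K E = monodromy_aux v K E"

text \<open>lp(S) for S a subset of Z, realised as complex sequences on Z vanishing outside S;
  p ranges over [1, \<infinity>] as an extended real.\<close>

definition lp_space :: "ereal \<Rightarrow> int set \<Rightarrow> (int \<Rightarrow> complex) set" where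
  "lp_space p S = {x. (\<forall>n. n \<notin> S \<longrightarrow> x n = 0) \<and>
     (if p = \<infinity> then bounded (range x)
      else (\<lambda>n. cmod (x n) powr real_of_ereal p) summable_on UNIV)}"

definition lp_norm :: "ereal \<Rightarrow> (int \<Rightarrow> complex) \<Rightarrow> real" where
  "lp_norm p x = (if p = \<infinity> then (SUP n. cmod (x n))
     else (\<Sum>\<^sub>\<infinity>n. cmod (x n) powr real_of_ereal p) powr (1 / real_of_ereal p))"

definition lp_invertible :: "ereal \<Rightarrow> int set \<Rightarrow> ((int \<Rightarrow> complex) \<Rightarrow> (int \<Rightarrow> complex)) \<Rightarrow> bool" where
  "lp_invertible p S A \<longleftrightarrow>
     (\<exists>B. (\<forall>x\<in>lp_space p S. B x \<in> lp_space p S) \<and>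
          (\<forall>x\<in>lp_space p S. B (A x) = x) \<and>
          (\<forall>x\<in>lp_space p S. A (B x) = x) \<and>
          (\<forall>x\<in>lp_space p S. \<forall>y\<in>lp_space p S. \<forall>a b. B (\<lambda>n. a * x n + b * y n) = (\<lambda>n. a * B x n + b * B y n)) \<and>
          (\<exists>C. \<forall>x\<in>lp_space p S. lp_norm p (B x) \<le> C * lp_norm p x))"

definition H_op :: "(int \<Rightarrow> int) \<Rightarrow> (int \<Rightarrow> complex) \<Rightarrow> (int \<Rightarrow> complex)" where
  "H_op v x = (\<lambda>n. x (n + 1) + x (n - 1) + of_int (v n) * x n)"

definition H_plus :: "(int \<Rightarrow> int) \<Rightarrow> (int \<Rightarrow> complex) \<Rightarrow> (int \<Rightarrow> complex)" where
  "H_plus v x = (\<lambda>n. if n \<ge> 0 then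
      (if n + 1 \<ge> 0 then x (n + 1) else 0) + (if n - 1 \<ge> 0 then x (n - 1) else 0)
      + of_int (v n) * x n else 0)"

definition H_minus :: "(int \<Rightarrow> int) \<Rightarrow> (int \<Rightarrow> complex) \<Rightarrow> (int \<Rightarrow> complex)" where
  "H_minus v x = (\<lambda>n. if n \<le> 0 then
      (if n + 1 \<le> 0 then x (n + 1) else 0) + (if n - 1 \<le> 0 then x (n - 1) else 0)
      + of_int (v n) * x n else 0)"

end

theory Submission
  imports Defs
begin

text \<open>Solutions of \<open>H u = 0\<close> are determined by \<open>(u 0, u (-1))\<close>, and the monodromy
  matrix \<open>M = M(0)\<close>, which has determinant \<open>1\<close>, maps these data to \<open>(u K, u (K - 1))\<close>.
  An eigenvector of \<open>M\<close> for a root \<open>\<mu>\<close> of \<open>\<mu>\<^sup>2 - tr M \<mu> + 1\<close> therefore yields a Floquet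
  solution, \<open>u (n + K) = \<mu> u n\<close>.

  If \<open>\<bar>tr M\<bar> \<le> 2\<close>, then \<open>\<bar>\<mu>\<bar> = 1\<close>, and cutting the Floquet solution off by wide tents
  produces approximate eigenvectors for the eigenvalue \<open>0\<close> of \<open>H\<close>, \<open>H\<^sub>+\<close> and \<open>H\<^sub>-\<close>, so none
  of them has a bounded inverse on \<open>\<ell>\<^sup>p\<close>.

  If \<open>\<bar>tr M\<bar> > 2\<close>, there is a growing and a decaying Floquet solution, and the Green's
  function built from them decays exponentially off the diagonal, so by Young's inequality
  it is a bounded inverse on every \<open>\<ell>\<^sup>p\<close>. On a half-line the Floquet solution growing into
  the half-line is replaced by the solution vanishing just outside it. Since \<open>v\<close> is
  integer-valued, so is that solution; it therefore cannot decay along the half-line, so it is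
  independent of the Floquet solution that does.\<close>


section \<open>Solutions of the difference equation\<close>

definition is_solution :: "(int \<Rightarrow> int) \<Rightarrow> (int \<Rightarrow> complex) \<Rightarrow> bool" where
  "is_solution v u \<longleftrightarrow> (\<forall>n. u (n + 1) + u (n - 1) + of_int (v n) * u n = 0)"

lemma is_solutionD:
  assumes "is_solution v u"
  shows "u (n + 1) + u (n - 1) + of_int (v n) * u n = 0"
  using assms unfolding is_solution_def by blast

lemma is_solution_step_up:
  "is_solution v u \<Longrightarrow> u (n + 1) = - u (n - 1) - of_int (v n) * u n"
  using is_solutionD[of v u n] by (simp add: eq_neg_iff_add_eq_0 algebra_simps)

lemma is_solution_step_down:
  "is_solution v u \<Longrightarrow> u (n - 1) = - u (n + 1) - of_int (v n) * u n"
  using is_solutionD[of v u n] by (simp add: eq_neg_iff_add_eq_0 algebra_simps)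

lemma is_solution_values_in:
  assumes u: "is_solution v u"
    and closed: "\<And>a b n. a \<in> R \<Longrightarrow> b \<in> R \<Longrightarrow> - a - of_int (v n) * b \<in> R"
    and init: "u k \<in> R" "u (k + 1) \<in> R"
  shows "u n \<in> R"
proof -
  have "u n \<in> R \<and> u (n + 1) \<in> R"
  proof (induction n rule: int_induct[where k = k])
    case base
    show ?case using init by simp
  next
    case (step1 i)
    then show ?case
      using closed is_solution_step_up[OF u, of "i + 1"] by (simp add: add.assoc)
  next
    case (step2 i)
    then show ?case
      using closed is_solution_step_down[OF u, of i] by simp
  qed
  then show ?thesis by blast
qed

lemma is_solution_lincomb:
  assumes "is_solution v u" "is_solution v w"
  shows "is_solution v (\<lambda>n. a * u n + b * w n)"
  unfolding is_solution_def
proof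
  fix n
  have "a * (u (n + 1) + u (n - 1) + of_int (v n) * u n)
      + b * (w (n + 1) + w (n - 1) + of_int (v n) * w n) = 0"
    using is_solutionD[OF assms(1), of n] is_solutionD[OF assms(2), of n] by simp
  then show "a * u (n + 1) + b * w (n + 1) + (a * u (n - 1) + b * w (n - 1))
      + of_int (v n) * (a * u n + b * w n) = 0"
    by (simp add: algebra_simps)
qed

lemma is_solution_scaled: "is_solution v u \<Longrightarrow> is_solution v (\<lambda>n. c * u n)"
  using is_solution_lincomb[of v u u c 0] by (simp only: mult_zero_left add_0_right)

lemma is_solution_zero_if_two_zeros:
  assumes "is_solution v u" "u k = 0" "u (k + 1) = 0"
  shows "u n = 0"
proof -
  have "u n \<in> {0}"
    by (rule is_solution_values_in[OF assms(1)]) (use assms(2,3) in simp_all)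
  then show ?thesis by simp
qed

lemma is_solution_eqI:
  assumes u: "is_solution v u" and w: "is_solution v w"
    and "u k = w k" "u (k + 1) = w (k + 1)"
  shows "u = w"
proof
  fix n
  have "is_solution v (\<lambda>n. 1 * u n + (-1) * w n)" by (rule is_solution_lincomb[OF u w])
  then have "1 * u n + (-1) * w n = 0"
    by (rule is_solution_zero_if_two_zeros[where k = k]) (use assms in auto)
  then show "u n = w n" by simp
qed

lemma is_solution_shift:
  assumes "is_solution v u" "\<And>n. v (n + c) = v n"
  shows "is_solution v (\<lambda>n. u (n + c))"
  unfolding is_solution_def
proof
  fix n
  show "u (n + 1 + c) + u (n - 1 + c) + of_int (v n) * u (n + c) = 0"
    using is_solutionD[OF assms(1), of "n + c"] assms(2)[of n] by (simp add: algebra_simps)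
qed

text \<open>For the solution \<open>u\<close> with \<open>u 0 = a\<close> and \<open>u (-1) = b\<close>, \<open>forward_pair v a b k\<close> is
  \<open>(u k, u (k - 1))\<close> and \<open>backward_pair v a b k\<close> is \<open>(u (-k), u (-k - 1))\<close>.\<close>

fun forward_pair :: "(int \<Rightarrow> int) \<Rightarrow> complex \<Rightarrow> complex \<Rightarrow> nat \<Rightarrow> complex \<times> complex" where
  "forward_pair v a b 0 = (a, b)"
| "forward_pair v a b (Suc k) =
     (- of_int (v (int k)) * fst (forward_pair v a b k) - snd (forward_pair v a b k),
      fst (forward_pair v a b k))"

fun backward_pair :: "(int \<Rightarrow> int) \<Rightarrow> complex \<Rightarrow> complex \<Rightarrow> nat \<Rightarrow> complex \<times> complex" where
  "backward_pair v a b 0 = (a, b)"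
| "backward_pair v a b (Suc k) =
     (snd (backward_pair v a b k),
      - fst (backward_pair v a b k) - of_int (v (- int k - 1)) * snd (backward_pair v a b k))"

definition solution_with :: "(int \<Rightarrow> int) \<Rightarrow> complex \<Rightarrow> complex \<Rightarrow> int \<Rightarrow> complex" where
  "solution_with v a b n =
     (if n \<ge> 0 then fst (forward_pair v a b (nat n)) else snd (backward_pair v a b (nat (- n - 1))))"

lemma solution_with_0 [simp]: "solution_with v a b 0 = a"
  and solution_with_minus_1 [simp]: "solution_with v a b (-1) = b"
  by (simp_all add: solution_with_def)

lemma is_solution_solution_with: "is_solution v (solution_with v a b)"
  unfolding is_solution_def
proof
  fix n :: int
  consider "n \<ge> 1" | "n = 0" | "n \<le> -1" by linarith
  then show "solution_with v a b (n + 1) + solution_with v a b (n - 1)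
      + of_int (v n) * solution_with v a b n = 0"
  proof cases
    case 1
    define k where "k = nat (n - 1)"
    have k: "n = int k + 1" using 1 by (simp add: k_def)
    have "nat (n + 1) = Suc (Suc k)" "nat (n - 1) = k" "nat n = Suc k" using k by simp_all
    then show ?thesis using 1 by (simp add: solution_with_def k algebra_simps)
  next
    case 2
    then show ?thesis by (simp add: solution_with_def)
  next
    case 3
    define k where "k = nat (- n - 1)"
    have n: "n = - int k - 1" using 3 by (simp add: k_def)
    have "solution_with v a b n = snd (backward_pair v a b k)"
      "solution_with v a b (n - 1) = snd (backward_pair v a b (Suc k))"
      using 3 by (simp_all add: solution_with_def n nat_add_distrib)
    moreover have "solution_with v a b (n + 1) = fst (backward_pair v a b k)"
    proof (cases k)
      case (Suc k')
      then have "n + 1 = - int k' - 1" "nat (- (n + 1) - 1) = k'" using n by simp_all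
      then show ?thesis using Suc by (simp add: solution_with_def)
    qed (simp add: solution_with_def n)
    ultimately show ?thesis by (simp add: n)
  qed
qed


section \<open>Monodromy and Floquet solutions\<close>

lemma det_transfer: "det (transfer v n E) = 1"
  by (simp add: det_2 transfer_def)

lemma det_monodromy_aux: "det (monodromy_aux v k E) = 1"
  by (induction k) (simp_all add: det_mul det_transfer)

lemma transfer_mult_entries:
  "(transfer v k 0 ** M) $ 1 $ j = - real_of_int (v k) * M $ 1 $ j - M $ 2 $ j"
  "(transfer v k 0 ** M) $ 2 $ j = M $ 1 $ j"
  by (simp_all add: matrix_matrix_mult_def sum_2 transfer_def)

lemma solution_monodromy_aux:
  assumes u: "is_solution v u"
  shows "u (int k) = of_real (monodromy_aux v k 0 $ 1 $ 1) * u 0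
                   + of_real (monodromy_aux v k 0 $ 1 $ 2) * u (-1)
       \<and> u (int k - 1) = of_real (monodromy_aux v k 0 $ 2 $ 1) * u 0
                   + of_real (monodromy_aux v k 0 $ 2 $ 2) * u (-1)"
proof (induction k)
  case 0
  then show ?case by (simp add: mat_def)
next
  case (Suc k)
  let ?M = "monodromy_aux v k 0"
  have "u (int k + 1) = of_real (- real_of_int (v k) * ?M $ 1 $ 1 - ?M $ 2 $ 1) * u 0
      + of_real (- real_of_int (v k) * ?M $ 1 $ 2 - ?M $ 2 $ 2) * u (-1)"
    unfolding is_solution_step_up[OF u, of "int k"] using Suc.IH by (simp add: algebra_simps)
  moreover have "int (Suc k) = int k + 1" "int (Suc k) - 1 = int k" by simp_all
  ultimately show ?case using Suc.IH by (simp only: monodromy_aux.simps transfer_mult_entries)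
qed

lemma eigenvector_2x2:
  fixes a b c d \<mu> :: complex
  assumes "\<mu>\<^sup>2 - (a + d) * \<mu> + (a * d - b * c) = 0"
  obtains x y where "x \<noteq> 0 \<or> y \<noteq> 0" "a * x + b * y = \<mu> * x" "c * x + d * y = \<mu> * y"
proof -
  consider "b \<noteq> 0 \<or> \<mu> \<noteq> a" | "b = 0" "\<mu> = a" "c \<noteq> 0 \<or> \<mu> \<noteq> d" | "b = 0" "\<mu> = a" "c = 0" "\<mu> = d"
    by blast
  then show thesis
  proof cases
    case 1
    show thesis
      by (rule that[of b "\<mu> - a"]) (use 1 assms in \<open>auto simp: power2_eq_square algebra_simps\<close>)
  next
    case 2
    show thesis by (rule that[of "\<mu> - d" c]) (use 2 in \<open>auto simp: algebra_simps\<close>)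
  next
    case 3
    show thesis by (rule that[of 1 0]) (use 3 in auto)
  qed
qed

lemma unimodular_root_exists:
  fixes t :: real
  assumes "\<bar>t\<bar> \<le> 2"
  obtains \<mu> :: complex where "cmod \<mu> = 1" "\<mu>\<^sup>2 - of_real t * \<mu> + 1 = 0"
proof -
  define s where "s = sqrt (4 - t\<^sup>2)"
  have "\<bar>t\<bar>\<^sup>2 \<le> 2\<^sup>2" using assms by (intro power_mono) auto
  then have s: "s\<^sup>2 = 4 - t\<^sup>2" by (simp add: s_def)
  define \<mu> where "\<mu> = Complex (t / 2) (s / 2)"
  have "cmod \<mu> = sqrt ((t\<^sup>2 + s\<^sup>2) / 4)"
    by (simp add: \<mu>_def cmod_def power_divide add_divide_distrib)
  then have "cmod \<mu> = 1" using s by simp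
  moreover have "\<mu>\<^sup>2 - of_real t * \<mu> + 1 = 0"
    using s by (simp add: \<mu>_def complex_eq_iff power2_eq_square Complex_eq algebra_simps)
  ultimately show thesis by (rule that)
qed

lemma real_root_outside_unit_disc:
  fixes t :: real
  assumes "\<bar>t\<bar> > 2"
  obtains l :: real where "\<bar>l\<bar> > 1" "l\<^sup>2 - t * l + 1 = 0"
proof -
  define s where "s = sqrt (t\<^sup>2 - 4)"
  have "2\<^sup>2 < \<bar>t\<bar>\<^sup>2" using assms by (intro power_strict_mono) auto
  then have s: "s\<^sup>2 = t\<^sup>2 - 4" "s \<ge> 0" by (simp_all add: s_def)
  show thesis
  proof (cases "t > 0")
    case True
    show thesis
      by (rule that[of "(t + s) / 2"]) (use True assms s in \<open>auto simp: power2_eq_square field_simps\<close>)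
  next
    case False
    show thesis
      by (rule that[of "(t - s) / 2"]) (use False assms s in \<open>auto simp: power2_eq_square field_simps\<close>)
  qed
qed

lemma reciprocal_root:
  fixes \<mu> t :: "'a::field"
  assumes "\<mu>\<^sup>2 - t * \<mu> + 1 = 0"
  shows "(1 / \<mu>)\<^sup>2 - t * (1 / \<mu>) + 1 = 0"
proof -
  have "\<mu> \<noteq> 0" using assms by auto
  then have "(1 / \<mu>)\<^sup>2 - t * (1 / \<mu>) + 1 = (\<mu>\<^sup>2 - t * \<mu> + 1) / \<mu>\<^sup>2"
    by (simp add: field_simps power2_eq_square)
  then show ?thesis using assms by simp
qed

locale periodic_potential =
  fixes v :: "int \<Rightarrow> int" and K :: nat
  assumes period_pos: "K \<ge> 1" and periodic: "\<And>n. v (n + int K) = v n"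
begin

lemma floquet_solution:
  assumes root: "\<mu>\<^sup>2 - of_real (trace (monodromy v K 0)) * \<mu> + 1 = 0"
  obtains \<phi> where "is_solution v \<phi>" "\<phi> 0 \<noteq> 0 \<or> \<phi> (-1) \<noteq> 0" "\<And>n. \<phi> (n + int K) = \<mu> * \<phi> n"
proof -
  define M where "M = monodromy_aux v K 0"
  have "det M = 1" by (simp add: M_def det_monodromy_aux)
  then have "of_real (M $ 1 $ 1) * of_real (M $ 2 $ 2) - of_real (M $ 1 $ 2) * of_real (M $ 2 $ 1) = (1 :: complex)"
    unfolding det_2 by (metis of_real_1 of_real_diff of_real_mult)
  moreover have "trace (monodromy v K 0) = M $ 1 $ 1 + M $ 2 $ 2"
    by (simp add: trace_def sum_2 monodromy_def M_def)
  ultimately obtain x y where xy: "x \<noteq> 0 \<or> y \<noteq> 0"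
    "of_real (M $ 1 $ 1) * x + of_real (M $ 1 $ 2) * y = \<mu> * x"
    "of_real (M $ 2 $ 1) * x + of_real (M $ 2 $ 2) * y = \<mu> * y"
    using root eigenvector_2x2[of \<mu> "of_real (M $ 1 $ 1)" "of_real (M $ 2 $ 2)"
        "of_real (M $ 1 $ 2)" "of_real (M $ 2 $ 1)"] by auto
  define \<phi> where "\<phi> = solution_with v x y"
  have \<phi>: "is_solution v \<phi>" by (simp add: \<phi>_def is_solution_solution_with)
  have "(\<lambda>n. \<phi> (n + int K)) = (\<lambda>n. \<mu> * \<phi> n)"
  proof (rule is_solution_eqI[where k = "-1"])
    show "is_solution v (\<lambda>n. \<phi> (n + int K))" by (rule is_solution_shift[OF \<phi> periodic])
    show "is_solution v (\<lambda>n. \<mu> * \<phi> n)" by (rule is_solution_scaled[OF \<phi>])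
    show "\<phi> (-1 + int K) = \<mu> * \<phi> (-1)" "\<phi> (-1 + 1 + int K) = \<mu> * \<phi> (-1 + 1)"
      using solution_monodromy_aux[OF \<phi>, of K] xy by (simp_all add: \<phi>_def M_def add.commute)
  qed
  then show thesis using \<phi> xy by (intro that[of \<phi>]) (auto simp: \<phi>_def dest: fun_cong)
qed

end


section \<open>Wronskian and Green's function\<close>

definition wronskian :: "(int \<Rightarrow> complex) \<Rightarrow> (int \<Rightarrow> complex) \<Rightarrow> int \<Rightarrow> complex" where
  "wronskian a b n = b (n + 1) * a n - b n * a (n + 1)"

lemma wronskian_swap: "wronskian a b n = - wronskian b a n"
  by (simp add: wronskian_def)

lemma wronskian_const:
  assumes a: "is_solution v a" and b: "is_solution v b"
  shows "wronskian a b n = wronskian a b m"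
proof -
  have step: "wronskian a b (i + 1) = wronskian a b i" for i
    unfolding wronskian_def is_solution_step_up[OF a, of "i + 1"] is_solution_step_up[OF b, of "i + 1"]
    by (simp add: algebra_simps)
  show ?thesis
  proof (induction n rule: int_induct[where k = m])
    case (step2 i)
    then show ?case using step[of "i - 1"] by simp
  qed (simp_all add: step)
qed

lemma wronskian_eq_0_imp_multiple:
  assumes a: "is_solution v a" and b: "is_solution v b"
    and W: "wronskian a b k = 0" and b_nz: "b k \<noteq> 0 \<or> b (k + 1) \<noteq> 0"
  obtains c where "a = (\<lambda>n. c * b n)"
proof -
  define c where "c = (if b k \<noteq> 0 then a k / b k else a (k + 1) / b (k + 1))"
  have "a = (\<lambda>n. c * b n)"
  proof (rule is_solution_eqI[OF a is_solution_scaled[OF b], where k = k])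
    show "a k = c * b k" "a (k + 1) = c * b (k + 1)"
      using W b_nz by (auto simp: c_def wronskian_def field_simps)
  qed
  then show thesis by (rule that)
qed

lemma solution_in_span:
  assumes a: "is_solution v a" and b: "is_solution v b" and W: "wronskian a b k \<noteq> 0"
    and u: "is_solution v u"
  obtains c\<^sub>1 c\<^sub>2 where "\<And>n. u n = c\<^sub>1 * a n + c\<^sub>2 * b n"
proof -
  define D where "D = wronskian a b k"
  define c\<^sub>1 where "c\<^sub>1 = (u k * b (k + 1) - b k * u (k + 1)) / D"
  define c\<^sub>2 where "c\<^sub>2 = (a k * u (k + 1) - u k * a (k + 1)) / D"
  have "u = (\<lambda>n. c\<^sub>1 * a n + c\<^sub>2 * b n)"
  proof (rule is_solution_eqI[OF u is_solution_lincomb[OF a b], where k = k])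
    have "c\<^sub>1 * a j + c\<^sub>2 * b j
        = ((u k * b (k + 1) - b k * u (k + 1)) * a j + (a k * u (k + 1) - u k * a (k + 1)) * b j) / D"
      for j by (simp add: c\<^sub>1_def c\<^sub>2_def add_divide_distrib)
    moreover have "(u k * b (k + 1) - b k * u (k + 1)) * a k + (a k * u (k + 1) - u k * a (k + 1)) * b k
        = u k * D"
      "(u k * b (k + 1) - b k * u (k + 1)) * a (k + 1) + (a k * u (k + 1) - u k * a (k + 1)) * b (k + 1)
        = u (k + 1) * D"
      by (simp_all add: D_def wronskian_def algebra_simps)
    ultimately show "u k = c\<^sub>1 * a k + c\<^sub>2 * b k" "u (k + 1) = c\<^sub>1 * a (k + 1) + c\<^sub>2 * b (k + 1)"
      using W by (simp_all add: D_def)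
  qed
  then show thesis using that by metis
qed

definition green :: "(int \<Rightarrow> complex) \<Rightarrow> (int \<Rightarrow> complex) \<Rightarrow> int \<Rightarrow> int \<Rightarrow> complex" where
  "green a b n m = a (min n m) * b (max n m) / wronskian a b 0"

lemma green_sym: "green a b n m = green a b m n"
  by (simp add: green_def min.commute max.commute)

lemma green_equation:
  assumes a: "is_solution v a" and b: "is_solution v b" and W: "wronskian a b 0 \<noteq> 0"
  shows "green a b (n + 1) m + green a b (n - 1) m + of_int (v n) * green a b n m
       = (if n = m then 1 else 0)"
proof (cases n m rule: linorder_cases)
  case less
  then have "min (n + 1) m = n + 1" "max (n + 1) m = m" "min (n - 1) m = n - 1" "max (n - 1) m = m"
    "min n m = n" "max n m = m" by auto
  then have "green a b (n + 1) m + green a b (n - 1) m + of_int (v n) * green a b n m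
      = (a (n + 1) + a (n - 1) + of_int (v n) * a n) * b m / wronskian a b 0"
    by (simp add: green_def algebra_simps add_divide_distrib)
  then show ?thesis using less is_solutionD[OF a, of n] by simp
next
  case greater
  then have "min (n + 1) m = m" "max (n + 1) m = n + 1" "min (n - 1) m = m" "max (n - 1) m = n - 1"
    "min n m = m" "max n m = n" by auto
  then have "green a b (n + 1) m + green a b (n - 1) m + of_int (v n) * green a b n m
      = a m * (b (n + 1) + b (n - 1) + of_int (v n) * b n) / wronskian a b 0"
    by (simp add: green_def algebra_simps add_divide_distrib)
  then show ?thesis using greater is_solutionD[OF b, of n] by simp
next
  case equal
  have "green a b (n + 1) m + green a b (n - 1) m + of_int (v n) * green a b n m
      = (a n * b (n + 1) + b n * (a (n - 1) + of_int (v n) * a n)) / wronskian a b 0"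
    using equal by (simp add: green_def min_def max_def algebra_simps add_divide_distrib)
  also have "a (n - 1) + of_int (v n) * a n = - a (n + 1)"
    using is_solution_step_down[OF a, of n] by simp
  also have "a n * b (n + 1) + b n * - a (n + 1) = wronskian a b n"
    by (simp add: wronskian_def)
  also have "\<dots> = wronskian a b 0" by (rule wronskian_const[OF a b])
  finally show ?thesis using equal W by simp
qed


section \<open>Sequences in \<open>\<ell>\<^sup>p\<close>\<close>

lemma lp_space_vanishes: "x \<in> lp_space p S \<Longrightarrow> n \<notin> S \<Longrightarrow> x n = 0"
  by (simp add: lp_space_def)

lemma real_of_ereal_ge_1:
  assumes "1 \<le> p" "p \<noteq> \<infinity>"
  shows "real_of_ereal p \<ge> 1"
  using assms by (cases p) auto

lemma lp_norm_infinity_ge: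
  assumes "x \<in> lp_space \<infinity> S"
  shows "cmod (x n) \<le> lp_norm \<infinity> x"
proof -
  have "bdd_above (range (\<lambda>n. cmod (x n)))"
    using assms by (auto simp: lp_space_def bounded_iff bdd_above_def)
  then show ?thesis using cSUP_upper[of n UNIV "\<lambda>n. cmod (x n)"] by (simp add: lp_norm_def)
qed

lemma lp_norm_nonneg:
  assumes "x \<in> lp_space p S"
  shows "0 \<le> lp_norm p x"
proof (cases "p = \<infinity>")
  case True
  then show ?thesis using assms order_trans[OF norm_ge_zero lp_norm_infinity_ge] by blast
qed (simp add: lp_norm_def)

lemma lp_space_bounded:
  assumes "x \<in> lp_space p S" "1 \<le> p"
  obtains B where "\<And>n. cmod (x n) \<le> B"
proof (cases "p = \<infinity>")
  case True
  then show thesis using assms lp_norm_infinity_ge that by blast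
next
  case False
  define r where "r = real_of_ereal p"
  have r: "r \<ge> 1" using real_of_ereal_ge_1[OF assms(2) False] by (simp add: r_def)
  have sum: "(\<lambda>n. cmod (x n) powr r) summable_on UNIV"
    using assms False by (simp add: lp_space_def r_def)
  have "cmod (x n) \<le> (\<Sum>\<^sub>\<infinity>n. cmod (x n) powr r) powr (1 / r)" for n
  proof -
    have "(\<Sum>m\<in>{n}. cmod (x m) powr r) \<le> (\<Sum>\<^sub>\<infinity>m. cmod (x m) powr r)"
      by (rule finite_sum_le_infsum[OF sum]) auto
    then have "(cmod (x n) powr r) powr (1 / r) \<le> (\<Sum>\<^sub>\<infinity>m. cmod (x m) powr r) powr (1 / r)"
      using r by (intro powr_mono2) auto
    then show ?thesis using r by (simp add: powr_powr)
  qed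
  then show thesis by (rule that)
qed

lemma lp_invertible_imp_bounded_below:
  assumes "lp_invertible p S A"
  obtains C where "C \<ge> 0"
    "\<And>x. x \<in> lp_space p S \<Longrightarrow> A x \<in> lp_space p S \<Longrightarrow> lp_norm p x \<le> C * lp_norm p (A x)"
proof -
  obtain B C where BA: "\<And>x. x \<in> lp_space p S \<Longrightarrow> B (A x) = x"
    and bounded: "\<And>x. x \<in> lp_space p S \<Longrightarrow> lp_norm p (B x) \<le> C * lp_norm p x"
    using assms unfolding lp_invertible_def by blast
  show thesis
  proof (rule that[of "max C 0"])
    fix x assume x: "x \<in> lp_space p S" and Ax: "A x \<in> lp_space p S"
    have "lp_norm p x \<le> C * lp_norm p (A x)" using bounded[OF Ax] BA[OF x] by simp
    also have "\<dots> \<le> max C 0 * lp_norm p (A x)"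
      by (rule mult_right_mono) (use lp_norm_nonneg[OF Ax] in auto)
    finally show "lp_norm p x \<le> max C 0 * lp_norm p (A x)" .
  qed simp
qed

lemma infsum_finite_support:
  fixes f :: "int \<Rightarrow> real"
  assumes "finite F" "\<And>n. n \<notin> F \<Longrightarrow> f n = 0"
  shows "f summable_on UNIV" "infsum f UNIV = sum f F"
proof -
  show "f summable_on UNIV"
    using summable_on_cong_neutral[of F UNIV f f] assms by auto
  have "infsum f UNIV = infsum f F" by (rule infsum_cong_neutral) (use assms in auto)
  then show "infsum f UNIV = sum f F" using assms by simp
qed

text \<open>\<open>lp_root p N = N\<^sup>1\<^sup>/\<^sup>p\<close> (with \<open>1/\<infinity> = 0\<close>) is the \<open>\<ell>\<^sup>p\<close>-norm of the indicator of an
  \<open>N\<close>-element set.\<close>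

definition lp_root :: "ereal \<Rightarrow> real \<Rightarrow> real" where
  "lp_root p N = (if p = \<infinity> then 1 else N powr (1 / real_of_ereal p))"

lemma lp_root_pos: "N > 0 \<Longrightarrow> lp_root p N > 0"
  by (simp add: lp_root_def)

lemma lp_root_mult: "0 \<le> a \<Longrightarrow> 0 \<le> b \<Longrightarrow> lp_root p (a * b) = lp_root p a * lp_root p b"
  by (simp add: lp_root_def powr_mult)

lemma lp_root_mono:
  assumes "1 \<le> p" "0 \<le> a" "a \<le> b"
  shows "lp_root p a \<le> lp_root p b"
proof (cases "p = \<infinity>")
  case False
  then have "0 \<le> 1 / real_of_ereal p" using real_of_ereal_ge_1[OF assms(1)] by simp
  then show ?thesis using False assms by (simp add: lp_root_def powr_mono2)
qed (simp add: lp_root_def)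

lemma lp_root_le_self:
  assumes "1 \<le> p" "1 \<le> N"
  shows "lp_root p N \<le> N"
proof (cases "p = \<infinity>")
  case False
  have "N powr (1 / real_of_ereal p) \<le> N powr 1"
    using assms real_of_ereal_ge_1[OF assms(1) False] by (intro powr_mono) auto
  then show ?thesis using False assms(2) by (simp add: lp_root_def)
qed (use assms in \<open>simp add: lp_root_def\<close>)

lemma lp_space_finite_support:
  assumes "finite F" "F \<subseteq> S" "\<And>n. n \<notin> F \<Longrightarrow> x n = 0"
  shows "x \<in> lp_space p S"
proof -
  have "bounded (range x)"
  proof -
    have "range x \<subseteq> insert 0 (x ` F)" using assms(3) by auto
    then show ?thesis using assms(1) by (meson bounded_subset finite_imageI finite_imp_bounded finite_insert)
  qed
  moreover have "(\<lambda>n. cmod (x n) powr r) summable_on UNIV" for r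
    by (rule infsum_finite_support(1)[OF assms(1)]) (use assms(3) in simp)
  ultimately show ?thesis using assms(2,3) by (auto simp: lp_space_def)
qed

lemma lp_norm_finite_support_le:
  assumes p: "1 \<le> p" and F: "finite F" and supp: "\<And>n. n \<notin> F \<Longrightarrow> x n = 0"
    and bound: "\<And>n. cmod (x n) \<le> M"
  shows "lp_norm p x \<le> lp_root p (card F) * M"
proof (cases "p = \<infinity>")
  case True
  then show ?thesis using bound by (simp add: lp_norm_def lp_root_def cSUP_least)
next
  case False
  define r where "r = real_of_ereal p"
  have r: "r \<ge> 1" using real_of_ereal_ge_1[OF p False] by (simp add: r_def)
  have M: "M \<ge> 0" using bound[of 0] norm_ge_zero order_trans by blast
  have "(\<Sum>\<^sub>\<infinity>n. cmod (x n) powr r) = (\<Sum>n\<in>F. cmod (x n) powr r)"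
    by (rule infsum_finite_support(2)[OF F]) (use supp in simp)
  also have "\<dots> \<le> (\<Sum>n\<in>F. M powr r)"
    by (intro sum_mono powr_mono2) (use r bound in auto)
  finally have "(\<Sum>\<^sub>\<infinity>n. cmod (x n) powr r) \<le> real (card F) * M powr r" by simp
  then have "lp_norm p x \<le> (real (card F) * M powr r) powr (1 / r)"
    using False r by (simp add: lp_norm_def r_def powr_mono2 infsum_nonneg)
  also have "\<dots> = lp_root p (card F) * M"
    using False r M by (simp add: lp_root_def r_def powr_mult powr_powr)
  finally show ?thesis .
qed

lemma lp_norm_ge_finite_set:
  assumes p: "1 \<le> p" and x: "x \<in> lp_space p S" and F: "finite F" "F \<noteq> {}"
    and bound: "\<And>n. n \<in> F \<Longrightarrow> m \<le> cmod (x n)" and m: "m \<ge> 0"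
  shows "lp_root p (card F) * m \<le> lp_norm p x"
proof (cases "p = \<infinity>")
  case True
  obtain n where "n \<in> F" using F by blast
  then show ?thesis
    using True bound lp_norm_infinity_ge[of x S n] x by (simp add: lp_root_def) (meson order_trans)
next
  case False
  define r where "r = real_of_ereal p"
  have r: "r \<ge> 1" using real_of_ereal_ge_1[OF p False] by (simp add: r_def)
  have sum: "(\<lambda>n. cmod (x n) powr r) summable_on UNIV"
    using x False by (simp add: lp_space_def r_def)
  have "real (card F) * m powr r = (\<Sum>n\<in>F. m powr r)" by simp
  also have "\<dots> \<le> (\<Sum>n\<in>F. cmod (x n) powr r)"
    by (intro sum_mono powr_mono2) (use r bound m in auto)
  also have "\<dots> \<le> (\<Sum>\<^sub>\<infinity>n. cmod (x n) powr r)"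
    by (rule finite_sum_le_infsum[OF sum F(1)]) auto
  finally have "(real (card F) * m powr r) powr (1 / r) \<le> lp_norm p x"
    using False r by (simp add: lp_norm_def r_def powr_mono2)
  moreover have "(real (card F) * m powr r) powr (1 / r) = lp_root p (card F) * m"
    using False r m by (simp add: lp_root_def r_def powr_mult powr_powr)
  ultimately show ?thesis by simp
qed


section \<open>Approximate eigenvectors\<close>

definition jacobi_truncation ::
    "(int \<Rightarrow> int) \<Rightarrow> int set \<Rightarrow> ((int \<Rightarrow> complex) \<Rightarrow> (int \<Rightarrow> complex)) \<Rightarrow> bool" where
  "jacobi_truncation v S A \<longleftrightarrow> (\<forall>x. (\<forall>n. n \<notin> S \<longrightarrow> x n = 0) \<longrightarrow>
      A x = (\<lambda>n. if n \<in> S then x (n + 1) + x (n - 1) + of_int (v n) * x n else 0))"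

lemma jacobi_truncationD:
  "jacobi_truncation v S A \<Longrightarrow> (\<And>n. n \<notin> S \<Longrightarrow> x n = 0) \<Longrightarrow>
    A x n = (if n \<in> S then x (n + 1) + x (n - 1) + of_int (v n) * x n else 0)"
  unfolding jacobi_truncation_def by auto

lemma jacobi_truncation_H_op: "jacobi_truncation v UNIV (H_op v)"
  by (simp add: jacobi_truncation_def H_op_def)

lemma jacobi_truncation_H_plus: "jacobi_truncation v {0..} (H_plus v)"
  unfolding jacobi_truncation_def H_plus_def
proof (intro allI impI ext)
  fix x :: "int \<Rightarrow> complex" and n
  assume "\<forall>n. n \<notin> {0..} \<longrightarrow> x n = 0"
  then show "(if 0 \<le> n then (if 0 \<le> n + 1 then x (n + 1) else 0) + (if 0 \<le> n - 1 then x (n - 1) else 0)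
      + of_int (v n) * x n else 0)
    = (if n \<in> {0..} then x (n + 1) + x (n - 1) + of_int (v n) * x n else 0)"
    by auto
qed

lemma jacobi_truncation_H_minus: "jacobi_truncation v {..0} (H_minus v)"
  unfolding jacobi_truncation_def H_minus_def
proof (intro allI impI ext)
  fix x :: "int \<Rightarrow> complex" and n
  assume "\<forall>n. n \<notin> {..0} \<longrightarrow> x n = 0"
  then show "(if n \<le> 0 then (if n + 1 \<le> 0 then x (n + 1) else 0) + (if n - 1 \<le> 0 then x (n - 1) else 0)
      + of_int (v n) * x n else 0)
    = (if n \<in> {..0} then x (n + 1) + x (n - 1) + of_int (v n) * x n else 0)"
    by auto
qed

lemma periodic_int_shift:
  fixes f :: "int \<Rightarrow> 'a"
  assumes f: "\<And>n. f (n + K) = f n"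
  shows "f (n + K * j) = f n"
proof (induction j rule: int_induct[where k = 0])
  case (step1 i)
  then show ?case using f[of "n + K * i"] by (simp add: algebra_simps)
next
  case (step2 i)
  then show ?case using f[of "n + K * (i - 1)"] by (simp add: algebra_simps)
qed simp

lemma periodic_int_bounded:
  fixes f :: "int \<Rightarrow> real"
  assumes K: "K > 0" and f: "\<And>n. f (n + K) = f n"
  obtains B where "\<And>n. f n \<le> B"
proof
  fix n
  have "f n = f (n mod K + K * (n div K))" by simp
  also have "\<dots> = f (n mod K)" by (rule periodic_int_shift[where f = f]) (rule f)
  also have "\<dots> \<le> Max (f ` {0..<K})" by (rule Max_ge) (use K in auto)
  finally show "f n \<le> Max (f ` {0..<K})" .
qed

definition tent :: "int \<Rightarrow> nat \<Rightarrow> int \<Rightarrow> real" where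
  "tent c N n = max 0 (1 - real_of_int \<bar>n - c\<bar> / N)"

lemma tent_nonneg: "0 \<le> tent c N n"
  by (simp add: tent_def)

lemma tent_lipschitz: "\<bar>tent c N m - tent c N n\<bar> \<le> real_of_int \<bar>m - n\<bar> / N"
proof -
  have "\<bar>tent c N m - tent c N n\<bar> \<le> \<bar>real_of_int \<bar>n - c\<bar> / N - real_of_int \<bar>m - c\<bar> / N\<bar>"
    by (simp add: tent_def max_def abs_if)
  also have "\<dots> = \<bar>real_of_int (\<bar>n - c\<bar> - \<bar>m - c\<bar>)\<bar> / N"
    by (simp add: diff_divide_distrib[symmetric])
  also have "\<dots> \<le> real_of_int \<bar>m - n\<bar> / N"
    by (intro divide_right_mono) linarith+
  finally show ?thesis .
qed

lemma tent_eq_0: "0 < N \<Longrightarrow> N \<le> \<bar>n - c\<bar> \<Longrightarrow> tent c N n = 0"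
  by (simp add: tent_def field_simps)

lemma tent_ge_half:
  assumes "0 < N" "2 * \<bar>n - c\<bar> \<le> N"
  shows "1 / 2 \<le> tent c N n"
proof -
  have "real_of_int (2 * \<bar>n - c\<bar>) \<le> real_of_int (int N)" using assms(2) by (simp only: of_int_le_iff)
  then have "real_of_int \<bar>n - c\<bar> / N \<le> 1 / 2" using assms(1) by (simp add: field_simps)
  then show ?thesis unfolding tent_def by (intro max.coboundedI2) linarith
qed

text \<open>Cutting a bounded solution off by a tent of width \<open>N\<close> gives an approximate
  eigenvector: only the slope \<open>1 / N\<close> of the tent survives in \<open>A x\<close>.\<close>

lemma jacobi_truncation_tent:
  assumes A: "jacobi_truncation v S A" and \<phi>: "is_solution v \<phi>" and \<Phi>: "\<And>n. cmod (\<phi> n) \<le> \<Phi>"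
    and N: "0 < N" and S: "{c - int N .. c + int N} \<subseteq> S"
  defines "x \<equiv> \<lambda>n. of_real (tent c N n) * \<phi> n"
  shows "\<And>n. n \<notin> {c - int N .. c + int N} \<Longrightarrow> x n = 0"
    and "\<And>n. n \<notin> {c - int N .. c + int N} \<Longrightarrow> A x n = 0"
    and "\<And>n. cmod (A x n) \<le> 2 * \<Phi> / N"
proof -
  show x0: "x n = 0" if "n \<notin> {c - int N .. c + int N}" for n
  proof -
    have "int N \<le> \<bar>n - c\<bar>" using that by auto
    then show ?thesis by (simp add: x_def tent_eq_0[OF N])
  qed
  have Ax: "A x n = (if n \<in> S then x (n + 1) + x (n - 1) + of_int (v n) * x n else 0)" for n
    by (rule jacobi_truncationD[OF A]) (use x0 S in blast)
  show "A x n = 0" if "n \<notin> {c - int N .. c + int N}" for n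
  proof -
    have "int N \<le> \<bar>m - c\<bar>" if "m \<in> {n - 1, n, n + 1}" for m
      using that \<open>n \<notin> {c - int N .. c + int N}\<close> by auto
    then show ?thesis unfolding Ax by (simp add: x_def tent_eq_0[OF N])
  qed
  show "cmod (A x n) \<le> 2 * \<Phi> / N" for n
  proof -
    have \<Phi>0: "0 \<le> \<Phi>" using \<Phi>[of 0] norm_ge_zero order_trans by blast
    have "x (n + 1) + x (n - 1) + of_int (v n) * x n
        = of_real (tent c N (n + 1) - tent c N n) * \<phi> (n + 1)
        + of_real (tent c N (n - 1) - tent c N n) * \<phi> (n - 1)
        + of_real (tent c N n) * (\<phi> (n + 1) + \<phi> (n - 1) + of_int (v n) * \<phi> n)"
      by (simp add: x_def algebra_simps)
    also have "\<phi> (n + 1) + \<phi> (n - 1) + of_int (v n) * \<phi> n = 0" by (rule is_solutionD[OF \<phi>])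
    finally have "cmod (x (n + 1) + x (n - 1) + of_int (v n) * x n)
        = cmod (of_real (tent c N (n + 1) - tent c N n) * \<phi> (n + 1)
          + of_real (tent c N (n - 1) - tent c N n) * \<phi> (n - 1))"
      by (simp only: mult_zero_right add_0_right)
    also have "\<dots> \<le> \<bar>tent c N (n + 1) - tent c N n\<bar> * cmod (\<phi> (n + 1))
        + \<bar>tent c N (n - 1) - tent c N n\<bar> * cmod (\<phi> (n - 1))"
      by (rule norm_triangle_le) (simp only: norm_mult norm_of_real order_refl)
    also have "\<dots> \<le> 1 / N * \<Phi> + 1 / N * \<Phi>"
      using tent_lipschitz[of c N "n + 1" n] tent_lipschitz[of c N "n - 1" n]
      by (intro add_mono mult_mono \<Phi>) auto
    finally show ?thesis using \<Phi>0 by (simp add: Ax)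
  qed
qed

lemma centered_interval_in_residue_class:
  fixes K N :: nat
  assumes long: "\<And>L::nat. \<exists>a. {a .. a + int L} \<subseteq> S" and K: "K > 0"
  obtains t where "{n\<^sub>0 + int K * t - int N .. n\<^sub>0 + int K * t + int N} \<subseteq> S"
proof -
  obtain a where a: "{a .. a + int (2 * N + K)} \<subseteq> S" using long by blast
  define t where "t = - ((n\<^sub>0 - a - int N) div int K)"
  have "n\<^sub>0 + int K * t - (a + int N) = (n\<^sub>0 - a - int N) mod int K"
    by (simp add: t_def minus_div_mult_eq_mod[symmetric] algebra_simps)
  moreover have "0 \<le> (n\<^sub>0 - a - int N) mod int K" "(n\<^sub>0 - a - int N) mod int K < int K"
    using K by simp_all
  ultimately have "a + int N \<le> n\<^sub>0 + int K * t" "n\<^sub>0 + int K * t < a + int N + int K" by linarith+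
  then show thesis using a by (intro that[of t]) auto
qed

lemma lp_root_tent_support_le:
  fixes K J :: nat
  assumes p: "1 \<le> p" and K: "K > 0" and J: "J \<ge> 1"
  shows "lp_root p (card {c - int (2 * K * J) .. c + int (2 * K * J)}) \<le> 5 * K * lp_root p J"
proof -
  have "1 \<le> K * J" using K J by simp
  moreover have "card {c - int N .. c + int N} = 2 * N + 1" for N :: nat
    by (simp add: nat_add_distrib)
  ultimately have "card {c - int (2 * K * J) .. c + int (2 * K * J)} \<le> 5 * K * J"
    by (simp only: mult.assoc)
  then have "lp_root p (card {c - int (2 * K * J) .. c + int (2 * K * J)}) \<le> lp_root p (real (5 * K) * real J)"
    by (intro lp_root_mono[OF p]) (simp_all flip: of_nat_mult)
  also have "\<dots> = lp_root p (real (5 * K)) * lp_root p J" by (rule lp_root_mult) simp_all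
  also have "\<dots> \<le> real (5 * K) * lp_root p J"
    using K lp_root_pos[of J p] J by (intro mult_right_mono lp_root_le_self[OF p]) simp_all
  finally show ?thesis by simp
qed

text \<open>With \<open>N = 2 K J\<close> the tent is at least \<open>1/2\<close> at the \<open>J\<close> points \<open>c + K j\<close>, \<open>j < J\<close>,
  where the solution has the same modulus as at \<open>c\<close>; this gives the lower bound.\<close>

lemma tent_cutoff_norms:
  fixes K J :: nat
  assumes p: "1 \<le> p" and A: "jacobi_truncation v S A"
    and \<phi>: "is_solution v \<phi>" and \<Phi>: "\<And>n. cmod (\<phi> n) \<le> \<Phi>"
    and K: "K > 0" and J: "J \<ge> 1" and modulus: "\<And>n. cmod (\<phi> (n + int K)) = cmod (\<phi> n)"
    and S: "{c - int (2 * K * J) .. c + int (2 * K * J)} \<subseteq> S"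
  defines "x \<equiv> \<lambda>n. of_real (tent c (2 * K * J) n) * \<phi> n"
  shows "x \<in> lp_space p S" "A x \<in> lp_space p S"
    "lp_root p J * (cmod (\<phi> c) / 2) \<le> lp_norm p x"
    "lp_norm p (A x) \<le> lp_root p J * (5 * \<Phi> / J)"
proof -
  define N where "N = 2 * K * J"
  have N: "N > 0" using K J by (simp add: N_def)
  have S': "{c - int N .. c + int N} \<subseteq> S" using S by (simp add: N_def)
  have x0: "x n = 0" and Ax0: "A x n = 0" if "n \<notin> {c - int N .. c + int N}" for n
    unfolding x_def N_def using jacobi_truncation_tent(1,2)[OF A \<phi> \<Phi> N S' that] by (simp_all add: N_def)
  have Ax_le: "cmod (A x n) \<le> 2 * \<Phi> / N" for n
    unfolding x_def N_def using jacobi_truncation_tent(3)[OF A \<phi> \<Phi> N S'] by (simp add: N_def)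
  show x: "x \<in> lp_space p S" and Ax: "A x \<in> lp_space p S"
    using x0 Ax0 by (auto intro: lp_space_finite_support[OF _ S'])
  define F where "F = (\<lambda>j. c + int K * int j) ` {..<J}"
  have card_F: "card F = J"
    unfolding F_def using K by (subst card_image) (auto simp: inj_on_def)
  have large_on_F: "cmod (\<phi> c) / 2 \<le> cmod (x n)" if "n \<in> F" for n
  proof -
    obtain j where j: "j < J" "n = c + int K * int j" using \<open>n \<in> F\<close> by (auto simp: F_def)
    have "cmod (\<phi> n) = cmod (\<phi> c)"
      unfolding j(2) by (rule periodic_int_shift[where f = "\<lambda>n. cmod (\<phi> n)", OF modulus])
    have "int K * int j \<le> int K * int J" using j(1) by (intro mult_left_mono) auto
    then have "2 * \<bar>n - c\<bar> \<le> int N" by (simp add: j N_def abs_mult)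
    then have "1 / 2 * cmod (\<phi> n) \<le> tent c N n * cmod (\<phi> n)"
      by (intro mult_right_mono tent_ge_half[OF N]) simp_all
    then show ?thesis
      using \<open>cmod (\<phi> n) = cmod (\<phi> c)\<close> by (simp add: x_def N_def norm_mult tent_nonneg)
  qed
  have "lp_root p (card F) * (cmod (\<phi> c) / 2) \<le> lp_norm p x"
    by (rule lp_norm_ge_finite_set[OF p x _ _ large_on_F]) (use J in \<open>auto simp: F_def lessThan_empty_iff\<close>)
  then show "lp_root p J * (cmod (\<phi> c) / 2) \<le> lp_norm p x" unfolding card_F .
  have \<Phi>0: "0 \<le> \<Phi>" using \<Phi>[of 0] norm_ge_zero order_trans by blast
  have "lp_norm p (A x) \<le> lp_root p (card {c - int N .. c + int N}) * (2 * \<Phi> / N)"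
    by (rule lp_norm_finite_support_le[OF p]) (use Ax0 Ax_le in simp_all)
  also have "\<dots> \<le> 5 * K * lp_root p J * (2 * \<Phi> / N)"
    unfolding N_def using \<Phi>0 by (intro mult_right_mono lp_root_tent_support_le[OF p K J]) simp
  also have "\<dots> = lp_root p J * (5 * \<Phi> / J)"
    using K J by (simp add: N_def field_simps)
  finally show "lp_norm p (A x) \<le> lp_root p J * (5 * \<Phi> / J)" .
qed

lemma not_lp_invertible_if_solution_periodic_modulus:
  fixes K :: nat
  assumes p: "1 \<le> p" and A: "jacobi_truncation v S A"
    and long: "\<And>L::nat. \<exists>a. {a .. a + int L} \<subseteq> S"
    and \<phi>: "is_solution v \<phi>" "\<phi> n\<^sub>0 \<noteq> 0"
    and K: "K > 0" and modulus: "\<And>n. cmod (\<phi> (n + int K)) = cmod (\<phi> n)"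
  shows "\<not> lp_invertible p S A"
proof
  assume "lp_invertible p S A"
  then obtain C where C: "C \<ge> 0"
    and below: "\<And>x. x \<in> lp_space p S \<Longrightarrow> A x \<in> lp_space p S \<Longrightarrow> lp_norm p x \<le> C * lp_norm p (A x)"
    using lp_invertible_imp_bounded_below by blast
  obtain \<Phi> where \<Phi>: "\<And>n. cmod (\<phi> n) \<le> \<Phi>"
    using periodic_int_bounded[of "int K" "\<lambda>n. cmod (\<phi> n)"] K modulus by auto
  define c\<^sub>0 where "c\<^sub>0 = cmod (\<phi> n\<^sub>0)"
  have c\<^sub>0: "c\<^sub>0 > 0" using \<phi>(2) by (simp add: c\<^sub>0_def)
  define J :: nat where "J = nat \<lceil>10 * C * \<Phi> / c\<^sub>0\<rceil> + 1"
  have J: "J \<ge> 1" "10 * C * \<Phi> < J * c\<^sub>0"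
    using c\<^sub>0 by (simp_all add: J_def pos_divide_less_eq[symmetric]) linarith
  obtain t where S: "{n\<^sub>0 + int K * t - int (2 * K * J) .. n\<^sub>0 + int K * t + int (2 * K * J)} \<subseteq> S"
    using centered_interval_in_residue_class[OF long K] by blast
  have centre: "cmod (\<phi> (n\<^sub>0 + int K * t)) = c\<^sub>0"
    unfolding c\<^sub>0_def by (rule periodic_int_shift[where f = "\<lambda>n. cmod (\<phi> n)", OF modulus])
  note norms = tent_cutoff_norms[OF p A \<phi>(1) \<Phi> K J(1) modulus S, unfolded centre]
  have "lp_root p J * (c\<^sub>0 / 2) \<le> C * (lp_root p J * (5 * \<Phi> / J))"
    using norms(3) below[OF norms(1,2)] mult_left_mono[OF norms(4) C] by linarith
  also have "\<dots> = lp_root p J * (C * (5 * \<Phi> / J))" by (simp add: mult_ac)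
  finally have "c\<^sub>0 / 2 \<le> C * (5 * \<Phi> / J)"
    using lp_root_pos[of J p] J by (subst (asm) mult_le_cancel_left_pos) auto
  then show False using J by (simp add: field_simps)
qed


section \<open>Exponentially decaying kernels on \<open>\<ell>\<^sup>p\<close>\<close>

lemma has_sum_two_sided_geometric:
  fixes q :: real
  assumes q: "0 \<le> q" "q < 1"
  shows "((\<lambda>m::int. q ^ nat \<bar>n - m\<bar>) has_sum (1 + q) / (1 - q)) UNIV"
proof -
  have below: "((\<lambda>j. q ^ j) has_sum 1 / (1 - q)) UNIV"
    by (rule sums_nonneg_imp_has_sum[OF geometric_sums]) (use q in auto)
  have above: "((\<lambda>j. q ^ Suc j) has_sum q * (1 / (1 - q))) UNIV"
    using has_sum_cmult_right[OF below, of q] by simp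
  have "((\<lambda>m::int. q ^ nat \<bar>n - m\<bar>) has_sum 1 / (1 - q)) (range (\<lambda>j. n - int j))"
    using below by (subst has_sum_reindex) (auto simp: inj_on_def o_def)
  moreover have "((\<lambda>m::int. q ^ nat \<bar>n - m\<bar>) has_sum q * (1 / (1 - q))) (range (\<lambda>j. n + int j + 1))"
  proof -
    have "nat \<bar>n - (n + int j + 1)\<bar> = Suc j" for j by simp
    then show ?thesis using above by (subst has_sum_reindex) (auto simp: inj_on_def o_def)
  qed
  moreover have "range (\<lambda>j. n - int j) \<union> range (\<lambda>j. n + int j + 1) = UNIV"
  proof -
    have "m \<in> range (\<lambda>j. n - int j) \<union> range (\<lambda>j. n + int j + 1)" for m
    proof (cases "m \<le> n")
      case True
      then have "m = n - int (nat (n - m))" by simp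
      then show ?thesis by blast
    next
      case False
      then have "m = n + int (nat (m - n - 1)) + 1" by simp
      then show ?thesis by blast
    qed
    then show ?thesis by blast
  qed
  moreover have "range (\<lambda>j. n - int j) \<inter> range (\<lambda>j. n + int j + 1) = {}" by auto
  ultimately have "((\<lambda>m::int. q ^ nat \<bar>n - m\<bar>) has_sum 1 / (1 - q) + q * (1 / (1 - q))) UNIV"
    using has_sum_Un_disjoint by metis
  then show ?thesis using q by (simp add: field_simps)
qed

lemma summable_on_geometric_bound:
  fixes f :: "int \<Rightarrow> 'a::banach"
  assumes q: "0 \<le> q" "q < 1" and bound: "\<And>m. norm (f m) \<le> D * q ^ nat \<bar>n - m\<bar>"
  shows "f summable_on UNIV"
proof (rule abs_summable_summable)
  have "(\<lambda>m. D * q ^ nat \<bar>n - m\<bar>) summable_on UNIV"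
    using has_sum_cmult_right[OF has_sum_two_sided_geometric[OF q]] summable_on_def by blast
  then show "(\<lambda>m. norm (f m)) summable_on UNIV"
    by (rule summable_on_comparison_test) (use bound in auto)
qed

lemma has_sum_geometric_convolution:
  fixes z :: "int \<Rightarrow> real"
  assumes q: "0 \<le> q" "q < 1" and z: "\<And>m. 0 \<le> z m" "z summable_on UNIV"
  shows "((\<lambda>n. \<Sum>\<^sub>\<infinity>m. q ^ nat \<bar>n - m\<bar> * z m) has_sum (1 + q) / (1 - q) * infsum z UNIV) UNIV"
proof -
  define f where "f = (\<lambda>(m, n). q ^ nat \<bar>n - m\<bar> * z m)"
  have columns: "((\<lambda>n. f (m, n)) has_sum (1 + q) / (1 - q) * z m) UNIV" for m
    using has_sum_cmult_left[OF has_sum_two_sided_geometric[OF q, of m], of "z m"]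
    by (simp add: f_def abs_minus_commute)
  have "(\<lambda>m. (1 + q) / (1 - q) * z m) summable_on UNIV"
    by (rule summable_on_cmult_right[OF z(2)])
  then have f: "f summable_on UNIV \<times> UNIV"
    by (rule summable_on_SigmaI[OF columns]) (use q z in \<open>auto simp: f_def\<close>)
  have "(f has_sum (1 + q) / (1 - q) * infsum z UNIV) (UNIV \<times> UNIV)"
    by (rule has_sum_SigmaI[OF columns _ f]) (intro has_sum_cmult_right has_sum_infsum z(2))
  then have swapped: "((\<lambda>(n, m). f (m, n)) has_sum (1 + q) / (1 - q) * infsum z UNIV) (UNIV \<times> UNIV)"
    by (subst (asm) has_sum_swap) simp
  have rows: "((\<lambda>m. f (m, n)) has_sum (\<Sum>\<^sub>\<infinity>m. q ^ nat \<bar>n - m\<bar> * z m)) UNIV" for n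
  proof -
    have "(\<lambda>m. q ^ nat \<bar>n - m\<bar> * z m) summable_on UNIV"
      by (rule summable_on_comparison_test[OF z(2)]) (use q z in \<open>auto intro!: mult_left_le_one_le power_le_one\<close>)
    then show ?thesis by (simp add: f_def)
  qed
  show ?thesis by (rule has_sum_SigmaD[OF swapped]) (simp add: rows)
qed

lemma powr_ge_tangent:
  fixes r y Y :: real
  assumes r: "r \<ge> 1" and Y: "Y > 0" and y: "y \<ge> 0"
  shows "Y powr r + r * Y powr (r - 1) * (y - Y) \<le> y powr r"
proof (cases "y = 0")
  case True
  have "Y powr (r - 1) * Y = Y powr r" using Y by (simp add: powr_diff)
  then show ?thesis using True r Y by (simp add: algebra_simps mult_nonpos_nonneg)
next
  case False
  have "r * Y powr (r - 1) * (y - Y) \<le> y powr r - Y powr r"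
  proof (rule convex_on_imp_above_tangent[where A = "{0<..}"])
    show "convex_on {0<..} (\<lambda>x. x powr r)" by (rule powr_convex[OF r])
    show "((\<lambda>x. x powr r) has_field_derivative r * Y powr (r - 1)) (at Y within {0<..})"
      by (rule has_field_derivative_at_within[OF has_real_derivative_powr[OF Y]])
  qed (use Y y False in \<open>auto simp: interior_open\<close>)
  then show ?thesis by simp
qed

text \<open>The weighted power mean inequality (Jensen for \<open>t \<mapsto> t\<^sup>r\<close>), proved with the tangent
  at the weighted mean.\<close>

lemma infsum_weighted_powr_le:
  fixes w y :: "'a \<Rightarrow> real"
  assumes r: "r \<ge> 1" and w: "\<And>m. w m \<ge> 0" and y: "\<And>m. y m \<ge> 0"
    and sw: "(w has_sum W) UNIV" and swy: "((\<lambda>m. w m * y m) has_sum S) UNIV"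
    and swyr: "((\<lambda>m. w m * y m powr r) has_sum R) UNIV" and W: "W > 0"
  shows "S powr r \<le> W powr (r - 1) * R"
proof -
  define Y where "Y = S / W"
  have S: "S = W * Y" using W by (simp add: Y_def)
  have "S \<ge> 0" using has_sum_nonneg[OF swy] w y by simp
  then have "Y \<ge> 0" using W by (simp add: Y_def)
  have R: "R \<ge> 0" using has_sum_nonneg[OF swyr] w by simp
  show ?thesis
  proof (cases "Y = 0")
    case True
    then show ?thesis using R W S by simp
  next
    case False
    then have Y: "Y > 0" using \<open>Y \<ge> 0\<close> by simp
    define c where "c = r * Y powr (r - 1)"
    have "((\<lambda>m. Y powr r * w m + c * (w m * y m) + (- c * Y) * w m)
        has_sum Y powr r * W + c * S + (- c * Y) * W) UNIV"
      by (intro has_sum_add has_sum_cmult_right sw swy)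
    then have "((\<lambda>m. w m * (Y powr r + c * (y m - Y))) has_sum W * Y powr r) UNIV"
      by (simp add: S algebra_simps)
    then have "W * Y powr r \<le> R"
      by (rule has_sum_mono[OF _ swyr]) (use powr_ge_tangent[OF r Y y] w in \<open>auto simp: c_def intro: mult_left_mono\<close>)
    have "S powr r = W powr (r - 1) * (W * Y powr r)"
      using W Y by (simp add: S powr_mult powr_diff)
    also have "\<dots> \<le> W powr (r - 1) * R"
      by (rule mult_left_mono[OF \<open>W * Y powr r \<le> R\<close>]) simp
    finally show ?thesis .
  qed
qed

lemma geometric_convolution_le:
  fixes y :: "int \<Rightarrow> real"
  assumes q: "0 \<le> q" "q < 1" and y: "\<And>m. 0 \<le> y m" "\<And>m. y m \<le> M"
  shows "(\<lambda>m. q ^ nat \<bar>n - m\<bar> * y m) summable_on UNIV"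
    and "(\<Sum>\<^sub>\<infinity>m. q ^ nat \<bar>n - m\<bar> * y m) \<le> (1 + q) / (1 - q) * M"
proof -
  have le: "q ^ nat \<bar>n - m\<bar> * y m \<le> M * q ^ nat \<bar>n - m\<bar>" for m
    using mult_right_mono[OF y(2)[of m], of "q ^ nat \<bar>n - m\<bar>"] q by (simp add: mult.commute)
  show sum: "(\<lambda>m. q ^ nat \<bar>n - m\<bar> * y m) summable_on UNIV"
    by (rule summable_on_geometric_bound[OF q]) (use le q y in simp)
  have "(\<Sum>\<^sub>\<infinity>m. q ^ nat \<bar>n - m\<bar> * y m) \<le> (\<Sum>\<^sub>\<infinity>m. M * q ^ nat \<bar>n - m\<bar>)"
    by (rule infsum_mono[OF sum]) (use le has_sum_cmult_right[OF has_sum_two_sided_geometric[OF q]]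
        in \<open>auto simp: summable_on_def\<close>)
  also have "\<dots> = (1 + q) / (1 - q) * M"
    using infsumI[OF has_sum_cmult_right[OF has_sum_two_sided_geometric[OF q]]] by simp
  finally show "(\<Sum>\<^sub>\<infinity>m. q ^ nat \<bar>n - m\<bar> * y m) \<le> (1 + q) / (1 - q) * M" .
qed

lemma geometric_convolution_powr_le:
  fixes y :: "int \<Rightarrow> real"
  assumes q: "0 \<le> q" "q < 1" and r: "r \<ge> 1"
    and y: "\<And>m. 0 \<le> y m" "\<And>m. y m \<le> M" and yr: "(\<lambda>m. y m powr r) summable_on UNIV"
  defines "T \<equiv> \<lambda>n. \<Sum>\<^sub>\<infinity>m. q ^ nat \<bar>n - m\<bar> * y m"
  shows "(\<lambda>n. T n powr r) summable_on UNIV"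
    and "(\<Sum>\<^sub>\<infinity>n. T n powr r) \<le> ((1 + q) / (1 - q)) powr r * (\<Sum>\<^sub>\<infinity>m. y m powr r)"
proof -
  define W where "W = (1 + q) / (1 - q)"
  have W: "W > 0" using q by (simp add: W_def)
  define R where "R = (\<lambda>n. \<Sum>\<^sub>\<infinity>m. q ^ nat \<bar>n - m\<bar> * y m powr r)"
  have R: "(R has_sum W * (\<Sum>\<^sub>\<infinity>m. y m powr r)) UNIV"
    unfolding R_def W_def by (rule has_sum_geometric_convolution[OF q _ yr]) simp
  have yr_le: "y m powr r \<le> M powr r" for m using y r by (intro powr_mono2) auto
  have pointwise: "T n powr r \<le> W powr (r - 1) * R n" for n
    unfolding T_def R_def
  proof (rule infsum_weighted_powr_le[OF r _ y(1)])
    show "((\<lambda>m. q ^ nat \<bar>n - m\<bar>) has_sum W) UNIV"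
      unfolding W_def by (rule has_sum_two_sided_geometric[OF q])
    show "((\<lambda>m. q ^ nat \<bar>n - m\<bar> * y m) has_sum (\<Sum>\<^sub>\<infinity>m. q ^ nat \<bar>n - m\<bar> * y m)) UNIV"
      using geometric_convolution_le(1)[OF q y] by simp
    show "((\<lambda>m. q ^ nat \<bar>n - m\<bar> * y m powr r) has_sum (\<Sum>\<^sub>\<infinity>m. q ^ nat \<bar>n - m\<bar> * y m powr r)) UNIV"
      using geometric_convolution_le(1)[OF q _ yr_le] by simp
  qed (use q W in auto)
  have bound: "(\<lambda>n. W powr (r - 1) * R n) summable_on UNIV"
    using R summable_on_cmult_right summable_on_def by blast
  show "(\<lambda>n. T n powr r) summable_on UNIV"
    by (rule summable_on_comparison_test[OF bound]) (use pointwise in auto)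
  then have "(\<Sum>\<^sub>\<infinity>n. T n powr r) \<le> (\<Sum>\<^sub>\<infinity>n. W powr (r - 1) * R n)"
    by (rule infsum_mono[OF _ bound]) (rule pointwise)
  also have "\<dots> = W powr (r - 1) * (W * (\<Sum>\<^sub>\<infinity>m. y m powr r))"
    using infsumI[OF has_sum_cmult_right[OF R]] by simp
  also have "\<dots> = W powr r * (\<Sum>\<^sub>\<infinity>m. y m powr r)"
    using W by (simp add: powr_diff)
  finally show "(\<Sum>\<^sub>\<infinity>n. T n powr r) \<le> ((1 + q) / (1 - q)) powr r * (\<Sum>\<^sub>\<infinity>m. y m powr r)"
    by (simp add: W_def)
qed

lemma norm_geometric_kernel_le:
  fixes G :: "int \<Rightarrow> int \<Rightarrow> complex"
  assumes q: "0 \<le> q" "q < 1" and C: "C \<ge> 0"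
    and G: "\<And>n m. cmod (G n m) \<le> C * q ^ nat \<bar>n - m\<bar>" and B: "\<And>m. cmod (x m) \<le> B"
  shows "cmod (\<Sum>\<^sub>\<infinity>m. G n m * x m) \<le> C * (\<Sum>\<^sub>\<infinity>m. q ^ nat \<bar>n - m\<bar> * cmod (x m))"
proof -
  have le: "norm (G n m * x m) \<le> C * (q ^ nat \<bar>n - m\<bar> * cmod (x m))" for m
    using mult_right_mono[OF G[of n m] norm_ge_zero[of "x m"]] by (simp add: norm_mult mult.assoc)
  have summable: "(\<lambda>m. norm (G n m * x m)) summable_on UNIV"
  proof (rule summable_on_geometric_bound[OF q, where n = n and D = "C * B"])
    fix m
    have "C * (q ^ nat \<bar>n - m\<bar> * cmod (x m)) \<le> C * (q ^ nat \<bar>n - m\<bar> * B)"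
      using B C q by (intro mult_left_mono) auto
    then show "norm (norm (G n m * x m)) \<le> C * B * q ^ nat \<bar>n - m\<bar>"
      using le[of m] by (simp add: mult_ac)
  qed
  then have "cmod (\<Sum>\<^sub>\<infinity>m. G n m * x m) \<le> (\<Sum>\<^sub>\<infinity>m. norm (G n m * x m))"
    by (rule norm_infsum_bound[unfolded abs_summable_on_def])
  also have "\<dots> \<le> (\<Sum>\<^sub>\<infinity>m. C * (q ^ nat \<bar>n - m\<bar> * cmod (x m)))"
    by (rule infsum_mono[OF summable])
      (use le summable_on_cmult_right[OF geometric_convolution_le(1)[OF q _ B]] in auto)
  also have "\<dots> = C * (\<Sum>\<^sub>\<infinity>m. q ^ nat \<bar>n - m\<bar> * cmod (x m))"
    by (rule infsum_cmult_right')
  finally show ?thesis .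
qed

lemma lp_bound_if_dominated_by_convolution:
  assumes p: "1 \<le> p" and q: "0 \<le> q" "q < 1" and C: "C \<ge> 0" and x: "x \<in> lp_space p S"
    and y_outside: "\<And>n. n \<notin> S \<Longrightarrow> y n = 0"
    and y_le: "\<And>n. cmod (y n) \<le> C * (\<Sum>\<^sub>\<infinity>m. q ^ nat \<bar>n - m\<bar> * cmod (x m))"
  shows "y \<in> lp_space p S \<and> lp_norm p y \<le> C * ((1 + q) / (1 - q)) * lp_norm p x"
proof -
  define W where "W = (1 + q) / (1 - q)"
  have W: "W > 0" using q by (simp add: W_def)
  obtain B where B: "\<And>m. cmod (x m) \<le> B" using lp_space_bounded[OF x p] by blast
  define T where "T = (\<lambda>n. \<Sum>\<^sub>\<infinity>m. q ^ nat \<bar>n - m\<bar> * cmod (x m))"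
  show ?thesis
  proof (cases "p = \<infinity>")
    case True
    have y_bound: "cmod (y n) \<le> C * W * lp_norm p x" for n
    proof -
      have "T n \<le> W * lp_norm p x"
        unfolding T_def W_def
        by (rule geometric_convolution_le(2)[OF q]) (use lp_norm_infinity_ge x True in auto)
      then show ?thesis using y_le[of n] C by (simp add: T_def mult.assoc mult_left_mono order_trans)
    qed
    then have "bounded (range y)" by (auto simp: bounded_iff)
    then show ?thesis
      using True y_outside y_bound by (simp add: lp_space_def lp_norm_def cSUP_least W_def)
  next
    case False
    define r where "r = real_of_ereal p"
    have r: "r \<ge> 1" using real_of_ereal_ge_1[OF p False] by (simp add: r_def)
    have xr: "(\<lambda>m. cmod (x m) powr r) summable_on UNIV"
      using x False by (simp add: lp_space_def r_def)
    have conv: "(\<lambda>n. T n powr r) summable_on UNIV"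
      "(\<Sum>\<^sub>\<infinity>n. T n powr r) \<le> W powr r * (\<Sum>\<^sub>\<infinity>m. cmod (x m) powr r)"
      using geometric_convolution_powr_le[OF q r _ B xr] by (simp_all add: T_def W_def)
    have y_powr_le: "cmod (y n) powr r \<le> C powr r * T n powr r" for n
      using y_le[of n] C r by (simp add: T_def powr_mult[symmetric] powr_mono2)
    have y_summable: "(\<lambda>n. cmod (y n) powr r) summable_on UNIV"
      by (rule summable_on_comparison_test[OF summable_on_cmult_right[OF conv(1), of "C powr r"]])
        (use y_powr_le in auto)
    have "(\<Sum>\<^sub>\<infinity>n. cmod (y n) powr r) \<le> (\<Sum>\<^sub>\<infinity>n. C powr r * T n powr r)"
      by (rule infsum_mono[OF y_summable summable_on_cmult_right[OF conv(1)]]) (rule y_powr_le)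
    also have "\<dots> = C powr r * (\<Sum>\<^sub>\<infinity>n. T n powr r)" by (rule infsum_cmult_right')
    also have "\<dots> \<le> C powr r * (W powr r * (\<Sum>\<^sub>\<infinity>m. cmod (x m) powr r))"
      by (rule mult_left_mono[OF conv(2)]) simp
    finally have "(\<Sum>\<^sub>\<infinity>n. cmod (y n) powr r) powr (1 / r)
        \<le> (C powr r * (W powr r * (\<Sum>\<^sub>\<infinity>m. cmod (x m) powr r))) powr (1 / r)"
      using r by (intro powr_mono2) (auto intro: infsum_nonneg)
    also have "\<dots> = C * W * (\<Sum>\<^sub>\<infinity>m. cmod (x m) powr r) powr (1 / r)"
      using C W r by (simp add: powr_mult powr_powr infsum_nonneg)
    finally show ?thesis
      using False y_outside y_summable by (simp add: lp_space_def lp_norm_def r_def W_def)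
  qed
qed

lemma geometric_kernel_lp_bound:
  fixes G :: "int \<Rightarrow> int \<Rightarrow> complex"
  assumes p: "1 \<le> p" and q: "0 \<le> q" "q < 1" and C: "C \<ge> 0"
    and G: "\<And>n m. cmod (G n m) \<le> C * q ^ nat \<bar>n - m\<bar>"
    and G_outside: "\<And>n m. n \<notin> S \<Longrightarrow> G n m = 0"
    and x: "x \<in> lp_space p S"
  shows "(\<lambda>n. \<Sum>\<^sub>\<infinity>m. G n m * x m) \<in> lp_space p S"
    and "lp_norm p (\<lambda>n. \<Sum>\<^sub>\<infinity>m. G n m * x m) \<le> C * ((1 + q) / (1 - q)) * lp_norm p x"
proof -
  obtain B where B: "\<And>m. cmod (x m) \<le> B" using lp_space_bounded[OF x p] by blast
  show "(\<lambda>n. \<Sum>\<^sub>\<infinity>m. G n m * x m) \<in> lp_space p S"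
    and "lp_norm p (\<lambda>n. \<Sum>\<^sub>\<infinity>m. G n m * x m) \<le> C * ((1 + q) / (1 - q)) * lp_norm p x"
    using lp_bound_if_dominated_by_convolution[OF p q C x _ norm_geometric_kernel_le[OF q C G B]]
    by (simp_all add: G_outside)
qed


section \<open>Inverses from an exponential dichotomy\<close>

lemma infsum_indicator_single: "(\<Sum>\<^sub>\<infinity>m. if m = n then c else 0) = (c :: 'a::{comm_monoid_add, t2_space})"
proof -
  have "(\<Sum>\<^sub>\<infinity>m. if m = n then c else 0) = (\<Sum>\<^sub>\<infinity>m\<in>{n}. if m = n then c else 0)"
    by (rule infsum_cong_neutral) auto
  then show ?thesis by simp
qed

locale green_kernel =
  fixes v :: "int \<Rightarrow> int" and V :: int and S :: "int set"
    and A :: "(int \<Rightarrow> complex) \<Rightarrow> (int \<Rightarrow> complex)"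
    and G :: "int \<Rightarrow> int \<Rightarrow> complex" and q C :: real
  assumes truncation: "jacobi_truncation v S A"
    and v_bounded: "\<And>n. \<bar>v n\<bar> \<le> V"
    and q: "0 \<le> q" "q < 1" and C: "C \<ge> 0"
    and decay: "\<And>n m. cmod (G n m) \<le> C * q ^ nat \<bar>n - m\<bar>"
    and symmetric: "\<And>n m. G n m = G m n"
    and outside: "\<And>n m. n \<notin> S \<Longrightarrow> G n m = 0"
    and equation: "\<And>k m. k \<in> S \<Longrightarrow> m \<in> S \<Longrightarrow>
      G (k + 1) m + G (k - 1) m + of_int (v k) * G k m = (if k = m then 1 else 0)"
begin

definition kernel_op :: "(int \<Rightarrow> complex) \<Rightarrow> (int \<Rightarrow> complex)" where
  "kernel_op x = (\<lambda>n. \<Sum>\<^sub>\<infinity>m. G n m * x m)"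

lemma kernel_summable_shifted:
  assumes "\<And>m. cmod (x m) \<le> B"
  shows "(\<lambda>m. G n (m + d) * x m) summable_on UNIV"
proof (rule summable_on_geometric_bound[OF q, where n = "n - d" and D = "C * B"])
  fix m
  have "cmod (G n (m + d)) * cmod (x m) \<le> (C * q ^ nat \<bar>n - d - m\<bar>) * B"
    using decay[of n "m + d"] assms C q by (intro mult_mono) (auto simp: algebra_simps)
  then show "norm (G n (m + d) * x m) \<le> C * B * q ^ nat \<bar>n - d - m\<bar>"
    by (simp add: norm_mult mult_ac)
qed

lemma kernel_summable:
  assumes "\<And>m. cmod (x m) \<le> B"
  shows "(\<lambda>m. G n m * x m) summable_on UNIV"
  using kernel_summable_shifted[OF assms, of n 0] by simp

lemma has_sum_kernel_shifted:
  assumes "\<And>m. cmod (x m) \<le> B"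
  shows "((\<lambda>m. G n m * x (m + d)) has_sum (\<Sum>\<^sub>\<infinity>k. G n (k - d) * x k)) UNIV"
proof -
  have "(\<lambda>k. G n (k - d) * x k) summable_on UNIV"
    using kernel_summable_shifted[OF assms, of n "- d"] by simp
  then show ?thesis
    using has_sum_reindex_bij_betw[of "\<lambda>m. m + d" UNIV UNIV "\<lambda>k. G n (k - d) * x k"]
    by (simp add: bij_plus_right)
qed

lemma potential_kernel_summable:
  assumes B: "\<And>m. cmod (x m) \<le> B"
  shows "(\<lambda>k. of_int (v k) * (G n k * x k)) summable_on UNIV"
proof (rule summable_on_geometric_bound[OF q, where n = n and D = "V * (C * B)"])
  fix k
  have "cmod (of_int (v k) * (G n k * x k)) \<le> V * (C * q ^ nat \<bar>n - k\<bar> * B)"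
    unfolding norm_mult using v_bounded[of k] decay[of n k] B[of k] C q
    by (intro mult_mono) (auto simp flip: of_int_abs)
  then show "norm (of_int (v k) * (G n k * x k)) \<le> V * (C * B) * q ^ nat \<bar>n - k\<bar>"
    by (simp add: mult_ac)
qed

lemma kernel_op_lincomb:
  assumes "\<And>m. cmod (x m) \<le> B" "\<And>m. cmod (y m) \<le> B'"
  shows "kernel_op (\<lambda>n. a * x n + b * y n) = (\<lambda>n. a * kernel_op x n + b * kernel_op y n)"
proof
  fix n
  have "((\<lambda>m. a * (G n m * x m) + b * (G n m * y m)) has_sum a * kernel_op x n + b * kernel_op y n) UNIV"
    unfolding kernel_op_def
    by (intro has_sum_add has_sum_cmult_right has_sum_infsum kernel_summable[OF assms(1)]
        kernel_summable[OF assms(2)])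
  then show "kernel_op (\<lambda>n. a * x n + b * y n) n = a * kernel_op x n + b * kernel_op y n"
    unfolding kernel_op_def by (simp add: infsumI algebra_simps)
qed

lemma truncation_kernel_op:
  assumes x: "x \<in> lp_space p S" "1 \<le> p"
  shows "A (kernel_op x) = x"
proof
  fix n
  obtain B where B: "\<And>m. cmod (x m) \<le> B" using lp_space_bounded[OF x] by blast
  have A_eq: "A (kernel_op x) n = (if n \<in> S then kernel_op x (n + 1) + kernel_op x (n - 1)
      + of_int (v n) * kernel_op x n else 0)"
    by (rule jacobi_truncationD[OF truncation]) (simp add: kernel_op_def outside)
  show "A (kernel_op x) n = x n"
  proof (cases "n \<in> S")
    case False
    then show ?thesis using A_eq lp_space_vanishes[OF x(1)] by simp
  next
    case True
    have "((\<lambda>m. G (n + 1) m * x m + G (n - 1) m * x m + of_int (v n) * (G n m * x m))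
        has_sum kernel_op x (n + 1) + kernel_op x (n - 1) + of_int (v n) * kernel_op x n) UNIV"
      unfolding kernel_op_def
      by (intro has_sum_add has_sum_cmult_right has_sum_infsum kernel_summable[OF B])
    moreover have "G (n + 1) m * x m + G (n - 1) m * x m + of_int (v n) * (G n m * x m)
        = (if m = n then x n else 0)" for m
    proof -
      have "G (n + 1) m * x m + G (n - 1) m * x m + of_int (v n) * (G n m * x m)
          = (G (n + 1) m + G (n - 1) m + of_int (v n) * G n m) * x m"
        by (simp add: algebra_simps)
      then show ?thesis
        using equation[OF True, of m] lp_space_vanishes[OF x(1), of m] by (cases "m \<in> S") auto
    qed
    ultimately show ?thesis
      using True A_eq infsum_indicator_single[of n "x n"] by (simp add: infsumI)
  qed
qed

lemma kernel_op_truncation: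
  assumes x: "x \<in> lp_space p S" "1 \<le> p"
  shows "kernel_op (A x) = x"
proof
  fix n
  obtain B where B: "\<And>m. cmod (x m) \<le> B" using lp_space_bounded[OF x] by blast
  have A_eq: "A x m = (if m \<in> S then x (m + 1) + x (m - 1) + of_int (v m) * x m else 0)" for m
    by (rule jacobi_truncationD[OF truncation]) (use lp_space_vanishes[OF x(1)] in blast)
  have terms: "G n m * A x m = G n m * x (m + 1) + G n m * x (m - 1) + of_int (v m) * (G n m * x m)" for m
    using symmetric[of n m] outside[of m n] by (cases "m \<in> S") (simp_all add: A_eq algebra_simps)
  have left: "(\<lambda>k. G n (k - 1) * x k) summable_on UNIV"
    using kernel_summable_shifted[OF B, of n "-1"] by simp
  have right: "(\<lambda>k. G n (k + 1) * x k) summable_on UNIV"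
    using kernel_summable_shifted[OF B, of n 1] by simp
  note diag = potential_kernel_summable[OF B, of n]
  define s where "s = (\<Sum>\<^sub>\<infinity>k. G n (k - 1) * x k) + (\<Sum>\<^sub>\<infinity>k. G n (k + 1) * x k)
    + (\<Sum>\<^sub>\<infinity>k. of_int (v k) * (G n k * x k))"
  have "((\<lambda>m. G n m * x (m + 1)) has_sum (\<Sum>\<^sub>\<infinity>k. G n (k - 1) * x k)) UNIV"
    using has_sum_kernel_shifted[where x = x and n = n and d = 1, OF B] by simp
  moreover have "((\<lambda>m. G n m * x (m - 1)) has_sum (\<Sum>\<^sub>\<infinity>k. G n (k + 1) * x k)) UNIV"
    using has_sum_kernel_shifted[where x = x and n = n and d = "-1", OF B] by simp
  ultimately have "((\<lambda>m. G n m * A x m) has_sum s) UNIV"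
    unfolding terms s_def by (intro has_sum_add has_sum_infsum diag)
  then have "kernel_op (A x) n = s" by (simp add: kernel_op_def infsumI)
  have "((\<lambda>k. G n (k - 1) * x k + G n (k + 1) * x k + of_int (v k) * (G n k * x k)) has_sum s) UNIV"
    unfolding s_def by (intro has_sum_add has_sum_infsum left right diag)
  moreover have "G n (k - 1) * x k + G n (k + 1) * x k + of_int (v k) * (G n k * x k)
      = (if k = n then x n else 0)" for k
  proof (cases "n \<in> S")
    case False
    then show ?thesis using outside[of n] lp_space_vanishes[OF x(1) False] by simp
  next
    case True
    have "G n (k - 1) * x k + G n (k + 1) * x k + of_int (v k) * (G n k * x k)
        = (G (k + 1) n + G (k - 1) n + of_int (v k) * G k n) * x k"
      using symmetric by (simp add: algebra_simps)
    then show ?thesis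
      using equation[of k n] True lp_space_vanishes[OF x(1), of k] by (cases "k \<in> S") auto
  qed
  ultimately have "s = x n"
    using infsum_indicator_single[of n "x n"] by (simp add: infsumI)
  then show "kernel_op (A x) n = x n" using \<open>kernel_op (A x) n = s\<close> by simp
qed

lemma truncation_lp_invertible:
  assumes p: "1 \<le> p"
  shows "lp_invertible p S A"
  unfolding lp_invertible_def
proof (intro exI[of _ kernel_op] conjI ballI allI)
  fix x assume x: "x \<in> lp_space p S"
  show "kernel_op x \<in> lp_space p S"
    unfolding kernel_op_def by (rule geometric_kernel_lp_bound(1)[OF p q C decay outside x])
  show "kernel_op (A x) = x" by (rule kernel_op_truncation[OF x p])
  show "A (kernel_op x) = x" by (rule truncation_kernel_op[OF x p])
next
  fix x y a b assume "x \<in> lp_space p S" "y \<in> lp_space p S"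
  then show "kernel_op (\<lambda>n. a * x n + b * y n) = (\<lambda>n. a * kernel_op x n + b * kernel_op y n)"
    using lp_space_bounded[OF _ p] kernel_op_lincomb by metis
next
  show "\<exists>D. \<forall>x\<in>lp_space p S. lp_norm p (kernel_op x) \<le> D * lp_norm p x"
    unfolding kernel_op_def using geometric_kernel_lp_bound(2)[OF p q C decay outside] by blast
qed

end

lemma lp_invertible_of_dichotomy:
  fixes \<alpha> \<beta> :: "int \<Rightarrow> complex" and \<rho> M\<^sub>\<alpha> M\<^sub>\<beta> :: real
  assumes p: "1 \<le> p" and \<alpha>: "is_solution v \<alpha>" and \<beta>: "is_solution v \<beta>"
    and W: "wronskian \<alpha> \<beta> 0 \<noteq> 0" and \<rho>: "\<rho> > 1" and M: "M\<^sub>\<alpha> \<ge> 0" "M\<^sub>\<beta> \<ge> 0"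
    and \<alpha>_le: "\<And>n. n \<in> S \<Longrightarrow> cmod (\<alpha> n) \<le> M\<^sub>\<alpha> * \<rho> powr n"
    and \<beta>_le: "\<And>n. n \<in> S \<Longrightarrow> cmod (\<beta> n) \<le> M\<^sub>\<beta> * \<rho> powr (- n)"
    and boundary_up: "\<And>k m. k \<in> S \<Longrightarrow> m \<in> S \<Longrightarrow> k + 1 \<notin> S \<Longrightarrow> green \<alpha> \<beta> (k + 1) m = 0"
    and boundary_down: "\<And>k m. k \<in> S \<Longrightarrow> m \<in> S \<Longrightarrow> k - 1 \<notin> S \<Longrightarrow> green \<alpha> \<beta> (k - 1) m = 0"
    and v: "\<And>n. \<bar>v n\<bar> \<le> V" and A: "jacobi_truncation v S A"
  shows "lp_invertible p S A"
proof -
  define G where "G n m = (if n \<in> S \<and> m \<in> S then green \<alpha> \<beta> n m else 0)" for n m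
  define C where "C = M\<^sub>\<alpha> * M\<^sub>\<beta> / cmod (wronskian \<alpha> \<beta> 0)"
  have decay: "cmod (G n m) \<le> C * (1 / \<rho>) ^ nat \<bar>n - m\<bar>" for n m
  proof (cases "n \<in> S \<and> m \<in> S")
    case True
    then have S: "min n m \<in> S" "max n m \<in> S" by (auto simp: min_def max_def)
    have "\<rho> powr (min n m) * \<rho> powr (- max n m) = \<rho> powr (- real (nat \<bar>n - m\<bar>))"
      by (simp add: powr_add[symmetric] min_def max_def abs_if)
    also have "\<dots> = (1 / \<rho>) powr real (nat \<bar>n - m\<bar>)"
      using \<rho> by (simp add: powr_minus_divide powr_divide)
    also have "\<dots> = (1 / \<rho>) ^ nat \<bar>n - m\<bar>" by (rule powr_realpow) (use \<rho> in simp)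
    finally have \<rho>_eq: "\<rho> powr (min n m) * \<rho> powr (- max n m) = (1 / \<rho>) ^ nat \<bar>n - m\<bar>" .
    have "cmod (G n m) = cmod (\<alpha> (min n m)) * cmod (\<beta> (max n m)) / cmod (wronskian \<alpha> \<beta> 0)"
      using True by (simp add: G_def green_def norm_mult norm_divide)
    also have "\<dots> \<le> (M\<^sub>\<alpha> * \<rho> powr (min n m)) * (M\<^sub>\<beta> * \<rho> powr (- max n m)) / cmod (wronskian \<alpha> \<beta> 0)"
      using M by (intro divide_right_mono mult_mono \<alpha>_le \<beta>_le S) auto
    also have "\<dots> = C * (1 / \<rho>) ^ nat \<bar>n - m\<bar>"
      unfolding C_def \<rho>_eq[symmetric] by (simp add: field_simps)
    finally show ?thesis .
  next
    case False
    then have "G n m = 0" by (auto simp: G_def)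
    then show ?thesis using M \<rho> by (simp add: C_def)
  qed
  interpret green_kernel v V S A G "1 / \<rho>" C
  proof
    fix k m assume k: "k \<in> S" and m: "m \<in> S"
    have "G (k + 1) m = green \<alpha> \<beta> (k + 1) m" "G (k - 1) m = green \<alpha> \<beta> (k - 1) m"
      "G k m = green \<alpha> \<beta> k m"
      using boundary_up[OF k m] boundary_down[OF k m] k m by (auto simp: G_def)
    then show "G (k + 1) m + G (k - 1) m + of_int (v k) * G k m = (if k = m then 1 else 0)"
      using green_equation[OF \<alpha> \<beta> W] by simp
  qed (use decay \<rho> M v A in \<open>auto simp: G_def C_def green_sym\<close>)
  show ?thesis by (rule truncation_lp_invertible[OF p])
qed


section \<open>Growing and decaying solutions\<close>

lemma floquet_growth_bound:
  fixes K :: nat and \<rho> :: real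
  assumes K: "K > 0" and \<rho>: "\<rho> > 0"
    and floquet: "\<And>n. cmod (\<phi> (n + int K)) = \<rho> powr K * cmod (\<phi> n)"
  obtains M where "M \<ge> 0" "\<And>n. cmod (\<phi> n) \<le> M * \<rho> powr n"
proof -
  define g where "g n = cmod (\<phi> n) / \<rho> powr n" for n
  have "g (n + int K) = g n" for n
    using \<rho> by (simp add: g_def floquet powr_add)
  then obtain M where M: "\<And>n. g n \<le> M" using periodic_int_bounded[of "int K" g] K by auto
  show thesis
  proof
    show "M \<ge> 0" using M[of 0] \<rho> by (simp add: g_def) (meson norm_ge_zero order_trans)
    show "cmod (\<phi> n) \<le> M * \<rho> powr n" for n using M[of n] \<rho> by (simp add: g_def divide_le_eq)
  qed
qed

lemma wronskian_floquet_ne_0: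
  assumes a: "is_solution v a" "a 0 \<noteq> 0 \<or> a (-1) \<noteq> 0" "\<And>n. a (n + d) = \<mu> * a n"
    and b: "is_solution v b" "b 0 \<noteq> 0 \<or> b (-1) \<noteq> 0" "\<And>n. b (n + d) = \<kappa> * b n"
    and "\<mu> \<noteq> \<kappa>"
  shows "wronskian a b 0 \<noteq> 0"
proof
  assume "wronskian a b 0 = 0"
  then have "wronskian a b (-1) = 0" using wronskian_const[OF a(1) b(1)] by metis
  then obtain c where c: "a = (\<lambda>n. c * b n)"
    by (rule wronskian_eq_0_imp_multiple[OF a(1) b(1)]) (use b(2) in auto)
  have "(\<mu> - \<kappa>) * a n = 0" for n
    using a(3)[of n] b(3)[of n] by (auto simp: c algebra_simps)
  then have "a n = 0" for n using \<open>\<mu> \<noteq> \<kappa>\<close> by simp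
  then show False using a(2) by simp
qed

text \<open>This is where the integrality of \<open>v\<close> matters: integer-valued solutions cannot decay.\<close>

lemma integer_floquet_solution_eq_0:
  assumes u: "is_solution v u" "\<And>n. u n \<in> \<int>"
    and floquet: "\<And>n. u (n + d) = \<kappa> * u n" and \<kappa>: "cmod \<kappa> < 1"
  shows "u n = 0"
proof -
  define M where "M = cmod (u 0) + cmod (u (-1)) + 1"
  have M: "M > 0" by (simp add: M_def add_nonneg_pos)
  obtain j where j: "cmod \<kappa> ^ j < 1 / M"
    using real_arch_pow_inv[of "1 / M" "cmod \<kappa>"] M \<kappa> by auto
  have iterate: "u (e + int i * d) = \<kappa> ^ i * u e" for e i
  proof (induction i)
    case (Suc i)
    have "u (e + int (Suc i) * d) = u (e + int i * d + d)" by (simp add: algebra_simps)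
    then show ?case using Suc floquet by simp
  qed simp
  have small: "u (int j * d + e) = 0" if "e = 0 \<or> e = -1" for e
  proof -
    have "cmod (u (int j * d + e)) = cmod \<kappa> ^ j * cmod (u e)"
      using iterate[of e j] by (simp add: add.commute norm_mult norm_power)
    also have "\<dots> \<le> cmod \<kappa> ^ j * M"
      using that by (intro mult_left_mono) (auto simp: M_def)
    also have "\<dots> < 1" using j M by (simp add: pos_less_divide_eq)
    finally show ?thesis using u(2)[of "int j * d + e"] by (auto elim!: Ints_cases)
  qed
  show ?thesis
    by (rule is_solution_zero_if_two_zeros[OF u(1), where k = "int j * d - 1"])
      (use small[of "-1"] small[of 0] in simp_all)
qed

lemma wronskian_integer_solution_ne_0:
  assumes u: "is_solution v u" "\<And>n. u n \<in> \<int>" "u k \<noteq> 0"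
    and \<phi>: "is_solution v \<phi>" "\<phi> 0 \<noteq> 0 \<or> \<phi> (-1) \<noteq> 0" "\<And>n. \<phi> (n + d) = \<kappa> * \<phi> n"
    and \<kappa>: "cmod \<kappa> < 1"
  shows "wronskian u \<phi> 0 \<noteq> 0"
proof
  assume "wronskian u \<phi> 0 = 0"
  then have "wronskian u \<phi> (-1) = 0" using wronskian_const[OF u(1) \<phi>(1)] by metis
  then obtain c where c: "u = (\<lambda>n. c * \<phi> n)"
    by (rule wronskian_eq_0_imp_multiple[OF u(1) \<phi>(1)]) (use \<phi>(2) in auto)
  have "u k = 0"
    by (rule integer_floquet_solution_eq_0[OF u(1,2) _ \<kappa>, where d = d]) (simp add: c \<phi>(3))
  then show False using u(3) by simp
qed

lemma growth_bound_in_span: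
  fixes u a b :: "int \<Rightarrow> complex" and \<rho> M :: real
  assumes u: "\<And>n. u n = c\<^sub>1 * a n + c\<^sub>2 * b n"
    and a: "\<And>n. cmod (a n) \<le> M * \<rho> powr n" and b: "\<And>n. cmod (b n) \<le> M * \<rho> powr (- n)"
    and \<rho>: "\<rho> \<ge> 1" and M: "M \<ge> 0"
  shows "cmod (u n) \<le> (cmod c\<^sub>1 + cmod c\<^sub>2) * M * \<rho> powr \<bar>n\<bar>"
proof -
  have "M * \<rho> powr n \<le> M * \<rho> powr \<bar>n\<bar>" "M * \<rho> powr (- n) \<le> M * \<rho> powr \<bar>n\<bar>"
    using \<rho> M by (intro mult_left_mono powr_mono; simp)+
  then have "cmod c\<^sub>1 * cmod (a n) + cmod c\<^sub>2 * cmod (b n)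
      \<le> cmod c\<^sub>1 * (M * \<rho> powr \<bar>n\<bar>) + cmod c\<^sub>2 * (M * \<rho> powr \<bar>n\<bar>)"
    using a[of n] b[of n] by (intro add_mono mult_left_mono) auto
  moreover have "cmod (u n) \<le> cmod c\<^sub>1 * cmod (a n) + cmod c\<^sub>2 * cmod (b n)"
    using norm_triangle_ineq[of "c\<^sub>1 * a n" "c\<^sub>2 * b n"] by (simp add: u norm_mult)
  ultimately show ?thesis by (simp add: algebra_simps)
qed


section \<open>The periodic operator\<close>

context periodic_potential
begin

lemma potential_bounded: obtains V where "\<And>n. \<bar>v n\<bar> \<le> V"
proof -
  obtain B where "\<And>n. real_of_int \<bar>v n\<bar> \<le> B"
    using periodic_int_bounded[of "int K" "\<lambda>n. real_of_int \<bar>v n\<bar>"] period_pos periodic by auto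
  then have "\<bar>v n\<bar> \<le> \<lceil>B\<rceil>" for n by (meson ceiling_correct le_of_int_ceiling of_int_le_iff order_trans)
  then show thesis by (rule that)
qed

theorem not_lp_invertible_if_elliptic:
  assumes tr: "\<bar>trace (monodromy v K 0)\<bar> \<le> 2" and p: "1 \<le> p"
  shows "\<not> lp_invertible p UNIV (H_op v)" "\<not> lp_invertible p {0..} (H_plus v)"
    "\<not> lp_invertible p {..0} (H_minus v)"
proof -
  obtain \<mu> where \<mu>: "cmod \<mu> = 1" "\<mu>\<^sup>2 - of_real (trace (monodromy v K 0)) * \<mu> + 1 = 0"
    using unimodular_root_exists[OF tr] by blast
  obtain \<phi> where \<phi>: "is_solution v \<phi>" "\<phi> 0 \<noteq> 0 \<or> \<phi> (-1) \<noteq> 0" "\<And>n. \<phi> (n + int K) = \<mu> * \<phi> n"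
    using floquet_solution[OF \<mu>(2)] by blast
  obtain n\<^sub>0 where n\<^sub>0: "\<phi> n\<^sub>0 \<noteq> 0" using \<phi>(2) by blast
  have modulus: "cmod (\<phi> (n + int K)) = cmod (\<phi> n)" for n
    using \<phi>(3)[of n] \<mu>(1) by (simp add: norm_mult)
  note not_invertible = not_lp_invertible_if_solution_periodic_modulus[OF p _ _ \<phi>(1) n\<^sub>0 _ modulus]
  show "\<not> lp_invertible p UNIV (H_op v)"
    by (rule not_invertible[OF jacobi_truncation_H_op]) (use period_pos in auto)
  show "\<not> lp_invertible p {0..} (H_plus v)"
    by (rule not_invertible[OF jacobi_truncation_H_plus]) (use period_pos in auto)
  show "\<not> lp_invertible p {..0} (H_minus v)"
  proof (rule not_invertible[OF jacobi_truncation_H_minus])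
    show "\<exists>a. {a .. a + int L} \<subseteq> {..0}" for L by (rule exI[of _ "- int L"]) auto
  qed (use period_pos in auto)
qed

lemma hyperbolic_floquet_pair:
  assumes tr: "\<bar>trace (monodromy v K 0)\<bar> > 2"
  obtains \<phi>\<^sub>u \<phi>\<^sub>s :: "int \<Rightarrow> complex" and \<kappa> :: complex and \<rho> M :: real where
    "is_solution v \<phi>\<^sub>u" "\<phi>\<^sub>u 0 \<noteq> 0 \<or> \<phi>\<^sub>u (-1) \<noteq> 0" "\<And>n. \<phi>\<^sub>u (n + - int K) = \<kappa> * \<phi>\<^sub>u n"
    "is_solution v \<phi>\<^sub>s" "\<phi>\<^sub>s 0 \<noteq> 0 \<or> \<phi>\<^sub>s (-1) \<noteq> 0" "\<And>n. \<phi>\<^sub>s (n + int K) = \<kappa> * \<phi>\<^sub>s n"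
    "cmod \<kappa> < 1" "\<rho> > 1" "M \<ge> 0"
    "\<And>n. cmod (\<phi>\<^sub>u n) \<le> M * \<rho> powr n" "\<And>n. cmod (\<phi>\<^sub>s n) \<le> M * \<rho> powr (- n)"
    "wronskian \<phi>\<^sub>u \<phi>\<^sub>s 0 \<noteq> 0"
proof -
  obtain l :: real where l: "\<bar>l\<bar> > 1" "l\<^sup>2 - trace (monodromy v K 0) * l + 1 = 0"
    using real_root_outside_unit_disc[OF tr] by blast
  define \<mu> where "\<mu> = complex_of_real l"
  have \<mu>: "cmod \<mu> > 1" using l(1) by (simp add: \<mu>_def)
  have root: "\<mu>\<^sup>2 - of_real (trace (monodromy v K 0)) * \<mu> + 1 = 0"
    using arg_cong[OF l(2), of complex_of_real] by (simp add: \<mu>_def)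
  obtain \<phi>\<^sub>u where \<phi>\<^sub>u: "is_solution v \<phi>\<^sub>u" "\<phi>\<^sub>u 0 \<noteq> 0 \<or> \<phi>\<^sub>u (-1) \<noteq> 0"
    "\<And>n. \<phi>\<^sub>u (n + int K) = \<mu> * \<phi>\<^sub>u n"
    using floquet_solution[OF root] by blast
  obtain \<phi>\<^sub>s where \<phi>\<^sub>s: "is_solution v \<phi>\<^sub>s" "\<phi>\<^sub>s 0 \<noteq> 0 \<or> \<phi>\<^sub>s (-1) \<noteq> 0"
    "\<And>n. \<phi>\<^sub>s (n + int K) = 1 / \<mu> * \<phi>\<^sub>s n"
    using floquet_solution[OF reciprocal_root[OF root]] by blast
  have backward: "\<phi>\<^sub>u (n + - int K) = 1 / \<mu> * \<phi>\<^sub>u n" for n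
    using \<phi>\<^sub>u(3)[of "n - int K"] \<mu> by (auto simp: field_simps)
  define \<rho> where "\<rho> = cmod \<mu> powr (1 / K)"
  have \<rho>: "\<rho> > 1" using \<mu> period_pos by (simp add: \<rho>_def)
  have \<rho>K: "\<rho> powr K = cmod \<mu>" "(1 / \<rho>) powr K = 1 / cmod \<mu>"
    using \<mu> period_pos by (simp_all add: \<rho>_def powr_powr powr_divide)
  obtain M\<^sub>u where M\<^sub>u: "M\<^sub>u \<ge> 0" "\<And>n. cmod (\<phi>\<^sub>u n) \<le> M\<^sub>u * \<rho> powr n"
    using floquet_growth_bound[of K \<rho> \<phi>\<^sub>u] period_pos \<rho> \<rho>K \<phi>\<^sub>u(3) by (auto simp: norm_mult)
  obtain M\<^sub>s where M\<^sub>s: "M\<^sub>s \<ge> 0" "\<And>n. cmod (\<phi>\<^sub>s n) \<le> M\<^sub>s * \<rho> powr (- n)"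
    using floquet_growth_bound[of K "1 / \<rho>" \<phi>\<^sub>s] period_pos \<rho> \<rho>K \<phi>\<^sub>s(3)
    by (auto simp: norm_mult norm_divide powr_minus_divide powr_divide)
  have \<kappa>: "cmod (1 / \<mu>) < 1" using \<mu> by (simp add: norm_divide divide_less_eq)
  then have "\<mu> \<noteq> 1 / \<mu>" using \<mu> by auto
  then have W: "wronskian \<phi>\<^sub>u \<phi>\<^sub>s 0 \<noteq> 0" by (rule wronskian_floquet_ne_0[OF \<phi>\<^sub>u \<phi>\<^sub>s])
  show thesis
  proof (rule that[OF \<phi>\<^sub>u(1,2) backward \<phi>\<^sub>s \<kappa> \<rho>, of "max M\<^sub>u M\<^sub>s"])
    show "cmod (\<phi>\<^sub>u n) \<le> max M\<^sub>u M\<^sub>s * \<rho> powr n" for n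
      using M\<^sub>u(2)[of n] by (meson max.cobounded1 mult_right_mono order_trans powr_ge_zero)
    show "cmod (\<phi>\<^sub>s n) \<le> max M\<^sub>u M\<^sub>s * \<rho> powr (- n)" for n
      using M\<^sub>s(2)[of n] by (meson max.cobounded2 mult_right_mono order_trans powr_ge_zero)
  qed (use M\<^sub>u W in auto)
qed

theorem lp_invertible_H_op_if_hyperbolic:
  assumes "\<bar>trace (monodromy v K 0)\<bar> > 2" and p: "1 \<le> p"
  shows "lp_invertible p UNIV (H_op v)"
proof -
  obtain \<phi>\<^sub>u \<phi>\<^sub>s :: "int \<Rightarrow> complex" and \<kappa> :: complex and \<rho> M :: real where
    \<phi>\<^sub>u: "is_solution v \<phi>\<^sub>u" and \<phi>\<^sub>s: "is_solution v \<phi>\<^sub>s"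
    and \<rho>: "\<rho> > 1" and M: "M \<ge> 0"
    and \<phi>\<^sub>u_le: "\<And>n. cmod (\<phi>\<^sub>u n) \<le> M * \<rho> powr n" and \<phi>\<^sub>s_le: "\<And>n. cmod (\<phi>\<^sub>s n) \<le> M * \<rho> powr (- n)"
    and W: "wronskian \<phi>\<^sub>u \<phi>\<^sub>s 0 \<noteq> 0"
    by (rule hyperbolic_floquet_pair[OF assms(1)]) blast
  obtain V where V: "\<And>n. \<bar>v n\<bar> \<le> V" using potential_bounded by blast
  show ?thesis
    by (rule lp_invertible_of_dichotomy[OF p \<phi>\<^sub>u \<phi>\<^sub>s W \<rho> M M \<phi>\<^sub>u_le \<phi>\<^sub>s_le _ _ V jacobi_truncation_H_op])
      simp_all
qed

theorem lp_invertible_H_plus_if_hyperbolic: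
  assumes "\<bar>trace (monodromy v K 0)\<bar> > 2" and p: "1 \<le> p"
  shows "lp_invertible p {0..} (H_plus v)"
proof -
  obtain \<phi>\<^sub>u \<phi>\<^sub>s :: "int \<Rightarrow> complex" and \<kappa> :: complex and \<rho> M :: real where
    \<phi>\<^sub>u: "is_solution v \<phi>\<^sub>u" and \<phi>\<^sub>s: "is_solution v \<phi>\<^sub>s" "\<phi>\<^sub>s 0 \<noteq> 0 \<or> \<phi>\<^sub>s (-1) \<noteq> 0"
      "\<And>n. \<phi>\<^sub>s (n + int K) = \<kappa> * \<phi>\<^sub>s n"
    and \<kappa>: "cmod \<kappa> < 1" and \<rho>: "\<rho> > 1" and M: "M \<ge> 0"
    and \<phi>\<^sub>u_le: "\<And>n. cmod (\<phi>\<^sub>u n) \<le> M * \<rho> powr n" and \<phi>\<^sub>s_le: "\<And>n. cmod (\<phi>\<^sub>s n) \<le> M * \<rho> powr (- n)"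
    and W: "wronskian \<phi>\<^sub>u \<phi>\<^sub>s 0 \<noteq> 0"
    by (rule hyperbolic_floquet_pair[OF assms(1)]) blast
  obtain V where V: "\<And>n. \<bar>v n\<bar> \<le> V" using potential_bounded by blast
  define \<psi> where "\<psi> = solution_with v 1 0"
  have \<psi>: "is_solution v \<psi>" "\<psi> 0 = 1" "\<psi> (-1) = 0"
    by (simp_all add: \<psi>_def is_solution_solution_with)
  have \<psi>_int: "\<psi> n \<in> \<int>" for n
    by (rule is_solution_values_in[OF \<psi>(1), where k = "-1"]) (simp_all add: \<psi>)
  have W_boundary: "wronskian \<psi> \<phi>\<^sub>s 0 \<noteq> 0"
    by (rule wronskian_integer_solution_ne_0[OF \<psi>(1) \<psi>_int, where k = 0, OF _ \<phi>\<^sub>s \<kappa>]) (simp add: \<psi>)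
  obtain c\<^sub>1 c\<^sub>2 where c: "\<And>n. \<psi> n = c\<^sub>1 * \<phi>\<^sub>u n + c\<^sub>2 * \<phi>\<^sub>s n"
    using solution_in_span[OF \<phi>\<^sub>u \<phi>\<^sub>s(1) W \<psi>(1)] by blast
  show ?thesis
  proof (rule lp_invertible_of_dichotomy[OF p \<psi>(1) \<phi>\<^sub>s(1) W_boundary \<rho> _ M _ \<phi>\<^sub>s_le _ _ V
        jacobi_truncation_H_plus])
    show "cmod (\<psi> n) \<le> (cmod c\<^sub>1 + cmod c\<^sub>2) * M * \<rho> powr n" if "n \<in> {0..}" for n
      using growth_bound_in_span[OF c \<phi>\<^sub>u_le \<phi>\<^sub>s_le _ M, of n] that \<rho> by simp
    show "green \<psi> \<phi>\<^sub>s (k - 1) m = 0" if "k \<in> {0..}" "m \<in> {0..}" "k - 1 \<notin> {0..}" for k m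
      using that \<psi>(3) by (simp add: green_def min_def)
  qed (use M in auto)
qed

theorem lp_invertible_H_minus_if_hyperbolic:
  assumes "\<bar>trace (monodromy v K 0)\<bar> > 2" and p: "1 \<le> p"
  shows "lp_invertible p {..0} (H_minus v)"
proof -
  obtain \<phi>\<^sub>u \<phi>\<^sub>s :: "int \<Rightarrow> complex" and \<kappa> :: complex and \<rho> M :: real where
    \<phi>\<^sub>u: "is_solution v \<phi>\<^sub>u" "\<phi>\<^sub>u 0 \<noteq> 0 \<or> \<phi>\<^sub>u (-1) \<noteq> 0" "\<And>n. \<phi>\<^sub>u (n + - int K) = \<kappa> * \<phi>\<^sub>u n"
    and \<phi>\<^sub>s: "is_solution v \<phi>\<^sub>s"
    and \<kappa>: "cmod \<kappa> < 1" and \<rho>: "\<rho> > 1" and M: "M \<ge> 0"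
    and \<phi>\<^sub>u_le: "\<And>n. cmod (\<phi>\<^sub>u n) \<le> M * \<rho> powr n" and \<phi>\<^sub>s_le: "\<And>n. cmod (\<phi>\<^sub>s n) \<le> M * \<rho> powr (- n)"
    and W: "wronskian \<phi>\<^sub>u \<phi>\<^sub>s 0 \<noteq> 0"
    by (rule hyperbolic_floquet_pair[OF assms(1)]) blast
  obtain V where V: "\<And>n. \<bar>v n\<bar> \<le> V" using potential_bounded by blast
  define \<psi> where "\<psi> = solution_with v 1 (- of_int (v 0))"
  have \<psi>: "is_solution v \<psi>" "\<psi> 0 = 1" "\<psi> 1 = 0"
    using is_solution_step_up[OF is_solution_solution_with, of v 1 "- of_int (v 0)" 0]
    by (simp_all add: \<psi>_def is_solution_solution_with)
  have \<psi>_int: "\<psi> n \<in> \<int>" for n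
    by (rule is_solution_values_in[OF \<psi>(1), where k = 0]) (simp_all add: \<psi>)
  have "wronskian \<psi> \<phi>\<^sub>u 0 \<noteq> 0"
    by (rule wronskian_integer_solution_ne_0[OF \<psi>(1) \<psi>_int, where k = 0, OF _ \<phi>\<^sub>u \<kappa>]) (simp add: \<psi>)
  then have W_boundary: "wronskian \<phi>\<^sub>u \<psi> 0 \<noteq> 0" by (subst wronskian_swap) simp
  obtain c\<^sub>1 c\<^sub>2 where c: "\<And>n. \<psi> n = c\<^sub>1 * \<phi>\<^sub>u n + c\<^sub>2 * \<phi>\<^sub>s n"
    using solution_in_span[OF \<phi>\<^sub>u(1) \<phi>\<^sub>s W \<psi>(1)] by blast
  show ?thesis
  proof (rule lp_invertible_of_dichotomy[OF p \<phi>\<^sub>u(1) \<psi>(1) W_boundary \<rho> M _ \<phi>\<^sub>u_le _ _ _ V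
        jacobi_truncation_H_minus])
    show "cmod (\<psi> n) \<le> (cmod c\<^sub>1 + cmod c\<^sub>2) * M * \<rho> powr (- n)" if "n \<in> {..0}" for n
      using growth_bound_in_span[OF c \<phi>\<^sub>u_le \<phi>\<^sub>s_le _ M, of n] that \<rho> by simp
    show "green \<phi>\<^sub>u \<psi> (k + 1) m = 0" if "k \<in> {..0}" "m \<in> {..0}" "k + 1 \<notin> {..0}" for k m
    proof -
      have "k = 0" using that by simp
      then show ?thesis using that \<psi>(3) by (simp add: green_def max_def)
    qed
  qed (use M in auto)
qed

end

theorem proposition3p13:
  fixes p :: ereal and v :: "int \<Rightarrow> int" and K :: nat
  assumes "1 \<le> p"
    and "K \<ge> 1"
    and "\<And>n. v (n + int K) = v n"
  shows "(lp_invertible p UNIV (H_op v) \<longleftrightarrow> lp_invertible p {0..} (H_plus v))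
       \<and> (lp_invertible p {0..} (H_plus v) \<longleftrightarrow> lp_invertible p {..0} (H_minus v))
       \<and> (lp_invertible p {..0} (H_minus v) \<longleftrightarrow> \<bar>trace (monodromy v K 0)\<bar> > 2)"
proof -
  interpret periodic_potential v K using assms(2,3) by unfold_locales
  show ?thesis
  proof (cases "\<bar>trace (monodromy v K 0)\<bar> > 2")
    case True
    then show ?thesis
      using lp_invertible_H_op_if_hyperbolic lp_invertible_H_plus_if_hyperbolic
        lp_invertible_H_minus_if_hyperbolic assms(1) by simp
  next
    case False
    then show ?thesis using not_lp_invertible_if_elliptic[OF _ assms(1)] by simp
  qed
qed

end
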